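(* Let $F=\{\mathbf{p}_0,\ldots,\mathbf{p}_n\}\subset\mathbb{R}^d$ be a finite set of points not contained in any $(d-1)$-dimensional affine subspace of $\mathbb{R}^d$, and let $k\in\mathbb{N}$. Then there exists $\delta_k=\delta_k(F)>0$ such that for every $\lambda\in(1-\delta_k,1)$, the homogeneous IFS $\Phi=\{S_i\}_{i=0}^n$ with $S_i(\mathbf{x})=\lambda\mathbf{x}+(1-\lambda)\mathbf{p}_i$ satisfies $X_k=\mathrm{int}(X)$.
   Context: Write $\mathcal{D}=\{0,\ldots,n\}$. For $\lambda\in(0,1)$, $X\subset\mathbb{R}^d$ denotes the unique non-empty compact set with $X=\bigcup_{i\in\mathcal{D}}S_i(X)$, and $\mathrm{int}(X)$ is its interior in $\mathbb{R}^d$. The coding map $\pi:\mathcal{D}^{\mathbb{N}}\to X$ is $\pi(\mathbf{a})=\lim_{j\to\infty}(S_{a_1}\circ\cdots\circ S_{a_j})(\mathbf{0})$; a sequence $\mathbf{a}$ with $\pi(\mathbf{a})=\mathbf{x}$ is a coding of $\mathbf{x}$. For $\mathbf{b}\in\mathcal{D}^k$ and $\mathbf{a}\in\mathcal{D}^{\mathbb{N}}$ let $\mathrm{freq}_{\mathbf{b}}(\mathbf{a})=\lim_{m\to\infty}\frac{1}{m}\#\{1\le j\le m: a_j\cdots a_{j+k-1}=\mathbf{b}\}$ when the limit exists. $\mathbf{a}$ is $k$-simply normal if $\mathrm{freq}_{\mathbf{b}}(\mathbf{a})=(n+1)^{-k}$ for every $\mathbf{b}\in\mathcal{D}^k$.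 $X_k$ is the set of $\mathbf{x}\in X$ having at least one $k$-simply normal coding. *)

theory Defs
  imports "HOL-Analysis.Analysis"
begin

definition ifs_map :: "real \<Rightarrow> (nat \<Rightarrow> 'a::real_vector) \<Rightarrow> nat \<Rightarrow> 'a \<Rightarrow> 'a" where
  "ifs_map lam p i x = lam *\<^sub>R x + (1 - lam) *\<^sub>R (p i)"

definition attractor :: "real \<Rightarrow> (nat \<Rightarrow> 'a::euclidean_space) \<Rightarrow> nat \<Rightarrow> 'a set" where
  "attractor lam p n = (THE X. compact X \<and> X \<noteq> {} \<and>
      X = (\<Union>i\<in>{0..n}. ifs_map lam p i ` X))"

text \<open>Digit sequences are indexed from 0: a 0 is the first digit a_1 of the paper.
  prefix_map lam p a j = S_(a_1) o ... o S_(a_j).\<close>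
definition prefix_map :: "real \<Rightarrow> (nat \<Rightarrow> 'a::real_vector) \<Rightarrow> (nat \<Rightarrow> nat) \<Rightarrow> nat \<Rightarrow> 'a \<Rightarrow> 'a" where
  "prefix_map lam p a j = foldr (\<lambda>i f. ifs_map lam p (a i) \<circ> f) [0..<j] id"

definition coding_map :: "real \<Rightarrow> (nat \<Rightarrow> 'a::real_normed_vector) \<Rightarrow> (nat \<Rightarrow> nat) \<Rightarrow> 'a" where
  "coding_map lam p a = lim (\<lambda>j. prefix_map lam p a j 0)"

definition occ_count :: "nat list \<Rightarrow> (nat \<Rightarrow> nat) \<Rightarrow> nat \<Rightarrow> nat" where
  "occ_count b a m = card {j. j < m \<and> (\<forall>i < length b. a (j + i) = b ! i)}"

definition simply_normal :: "nat \<Rightarrow> nat \<Rightarrow> (nat \<Rightarrow> nat) \<Rightarrow> bool" where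
  "simply_normal n k a \<longleftrightarrow>
     (\<forall>b. length b = k \<and> set b \<subseteq> {0..n} \<longrightarrow>
        (\<lambda>m. real (occ_count b a m) / real m) \<longlonglongrightarrow> 1 / real (n + 1) ^ k)"

definition normal_points :: "real \<Rightarrow> (nat \<Rightarrow> 'a::euclidean_space) \<Rightarrow> nat \<Rightarrow> nat \<Rightarrow> 'a set" where
  "normal_points lam p n k = {x \<in> attractor lam p n. \<exists>a. (\<forall>j. a j \<in> {0..n}) \<and>
       coding_map lam p a = x \<and> simply_normal n k a}"

end

theory Submission
  imports Defs
begin

section \<open>Codings as series\<close>

definition coding_sum :: "real \<Rightarrow> (nat \<Rightarrow> 'a::real_vector) \<Rightarrow> (nat \<Rightarrow> nat) \<Rightarrow> nat \<Rightarrow> 'a" where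
  "coding_sum lam p a t = (\<Sum>r<t. ((1 - lam) * lam ^ r) *\<^sub>R p (a r))"

lemma coding_sum_Suc:
  "coding_sum lam p a (Suc t) = coding_sum lam p a t + ((1 - lam) * lam ^ t) *\<^sub>R p (a t)"
  by (simp add: coding_sum_def)

lemma coding_sum_add:
  "coding_sum lam p a (m + r) = coding_sum lam p a m + (\<Sum>i<r. ((1 - lam) * lam ^ (m + i)) *\<^sub>R p (a (m + i)))"
  by (induction r) (auto simp: coding_sum_def)

lemma coding_sum_cong: "(\<And>t. t < m \<Longrightarrow> a t = b t) \<Longrightarrow> coding_sum lam p a m = coding_sum lam p b m"
  unfolding coding_sum_def by (intro sum.cong) auto

lemma foldr_comp_eq_comp_foldr:
  fixes F :: "nat \<Rightarrow> 'a \<Rightarrow> 'a"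
  shows "foldr (\<lambda>i f. F i \<circ> f) xs g = foldr (\<lambda>i f. F i \<circ> f) xs id \<circ> g"
  by (induction xs arbitrary: g) (auto simp: comp_assoc)

lemma prefix_map_Suc: "prefix_map lam p a (Suc t) = prefix_map lam p a t \<circ> ifs_map lam p (a t)"
  unfolding prefix_map_def by (simp add: foldr_comp_eq_comp_foldr[of _ _ "ifs_map lam p (a t)"])

lemma prefix_map_apply: "prefix_map lam p a t y = lam ^ t *\<^sub>R y + coding_sum lam p a t"
proof (induction t arbitrary: y)
  case 0
  then show ?case by (simp add: prefix_map_def coding_sum_def)
next
  case (Suc t)
  have "prefix_map lam p a (Suc t) y = lam ^ t *\<^sub>R (lam *\<^sub>R y + (1 - lam) *\<^sub>R p (a t)) + coding_sum lam p a t"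
    using Suc by (simp add: prefix_map_Suc ifs_map_def)
  also have "\<dots> = lam ^ Suc t *\<^sub>R y + coding_sum lam p a (Suc t)"
    by (simp add: coding_sum_def algebra_simps)
  finally show ?case .
qed

lemma summable_coding_series:
  fixes p :: "nat \<Rightarrow> 'a::banach"
  assumes "0 < lam" "lam < 1" "\<forall>j. a j \<in> {0..n}"
  shows "summable (\<lambda>r. ((1 - lam) * lam ^ r) *\<^sub>R p (a r))"
proof (rule summable_comparison_test')
  define M where "M = (\<Sum>i\<le>n. norm (p i))"
  show "summable (\<lambda>r. M * ((1 - lam) * lam ^ r))"
    using assms by (intro summable_mult summable_geometric) auto
  fix r
  have "norm (p (a r)) \<le> M"
    unfolding M_def using assms(3) by (intro member_le_sum) auto
  then show "norm (((1 - lam) * lam ^ r) *\<^sub>R p (a r)) \<le> M * ((1 - lam) * lam ^ r)"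
    using assms by (simp add: mult_right_mono mult.commute)
qed

lemma coding_sum_tendsto:
  fixes p :: "nat \<Rightarrow> 'a::banach"
  assumes "0 < lam" "lam < 1" "\<forall>j. a j \<in> {0..n}"
  shows "coding_sum lam p a \<longlonglongrightarrow> (\<Sum>r. ((1 - lam) * lam ^ r) *\<^sub>R p (a r))"
  unfolding coding_sum_def by (intro summable_LIMSEQ summable_coding_series[OF assms])

lemma coding_map_eq_suminf:
  fixes p :: "nat \<Rightarrow> 'a::banach"
  assumes "0 < lam" "lam < 1" "\<forall>j. a j \<in> {0..n}"
  shows "coding_map lam p a = (\<Sum>r. ((1 - lam) * lam ^ r) *\<^sub>R p (a r))"
  unfolding coding_map_def prefix_map_apply
  using coding_sum_tendsto[OF assms, of p] by (simp add: limI)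

lemma coding_map_eqI:
  fixes p :: "nat \<Rightarrow> 'a::banach"
  assumes "0 < lam" "lam < 1" "\<forall>j. a j \<in> {0..n}"
    and "strict_mono f" "(\<lambda>J. coding_sum lam p a (f J)) \<longlonglongrightarrow> x"
  shows "coding_map lam p a = x"
proof -
  have "(coding_sum lam p a \<circ> f) \<longlonglongrightarrow> (\<Sum>r. ((1 - lam) * lam ^ r) *\<^sub>R p (a r))"
    using LIMSEQ_subseq_LIMSEQ[OF coding_sum_tendsto[OF assms(1-3), of p] assms(4)] .
  with assms(5) show ?thesis
    using coding_map_eq_suminf[OF assms(1-3)] LIMSEQ_unique by (auto simp: comp_def)
qed

section \<open>Convex combinations of finitely many points\<close>

lemma convex_hull_indexed_iff:
  assumes "finite I"
  shows "y \<in> convex hull (c ` I) \<longleftrightarrow>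
    (\<exists>\<beta>. (\<forall>i\<in>I. 0 \<le> \<beta> i) \<and> sum \<beta> I = 1 \<and> y = (\<Sum>i\<in>I. \<beta> i *\<^sub>R c i))"
proof -
  have "c ` I = (\<Union>i\<in>I. {c i})" by auto
  then show ?thesis
    using convex_hull_finite_union[OF assms, of "\<lambda>i. {c i}"] by auto
qed

lemma convex_hull_indexedI:
  assumes "finite I" "\<forall>i\<in>I. 0 \<le> \<beta> i" "sum \<beta> I = 1"
  shows "(\<Sum>i\<in>I. \<beta> i *\<^sub>R c i) \<in> convex hull (c ` I)"
  using convex_hull_indexed_iff[OF assms(1)] assms(2,3) by blast

lemma convex_hull_indexedE:
  assumes "finite I" "y \<in> convex hull (c ` I)"
  obtains \<beta> where "\<forall>i\<in>I. 0 \<le> \<beta> i" "sum \<beta> I = 1" "y = (\<Sum>i\<in>I. \<beta> i *\<^sub>R c i)"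
  using convex_hull_indexed_iff[OF assms(1)] assms(2) by blast

lemma interior_convex_hull_eq_positive_weights:
  fixes p :: "'i \<Rightarrow> 'a::euclidean_space"
  assumes "finite I" "aff_dim (p ` I) = int DIM('a)"
  shows "interior (convex hull (p ` I)) =
    {\<Sum>i\<in>I. w i *\<^sub>R p i | w. (\<forall>i\<in>I. 0 < w i) \<and> sum w I = 1}"
proof -
  have "affine hull (convex hull (p ` I)) = UNIV"
    using affine_hull_UNIV[OF assms(2)] by simp
  moreover have "p ` I = (\<Union>i\<in>I. {p i})" by auto
  ultimately have "interior (convex hull (p ` I)) = rel_interior (convex hull (\<Union>i\<in>I. {p i}))"
    by (simp add: rel_interior_interior)
  also have "\<dots> = {\<Sum>i\<in>I. w i *\<^sub>R s i | w s. (\<forall>i\<in>I. 0 < w i) \<and> sum w I = 1 \<and> (\<forall>i\<in>I. s i = p i)}"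
    using rel_interior_convex_hull_union[OF assms(1), of "\<lambda>i. {p i}"] by simp
  also have "\<dots> = {\<Sum>i\<in>I. w i *\<^sub>R p i | w. (\<forall>i\<in>I. 0 < w i) \<and> sum w I = 1}"
    by (fastforce cong: sum.cong)
  finally show ?thesis .
qed

lemma convex_combination_peel_vertex:
  fixes c :: "'i \<Rightarrow> 'a::real_vector"
  assumes "finite I" "\<forall>i\<in>I. 0 \<le> \<beta> i" "sum \<beta> I = 1" "0 < \<mu>" "1 - \<mu> \<le> 1 / card I"
  obtains j \<beta>' where "j \<in> I" "\<forall>i\<in>I. 0 \<le> \<beta>' i" "sum \<beta>' I = 1"
    "(\<Sum>i\<in>I. \<beta> i *\<^sub>R c i) = \<mu> *\<^sub>R (\<Sum>i\<in>I. \<beta>' i *\<^sub>R c i) + (1 - \<mu>) *\<^sub>R c j"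
proof -
  have "I \<noteq> {}" using assms(3) by auto
  obtain j where j: "j \<in> I" "1 / card I \<le> \<beta> j"
  proof (rule ccontr)
    assume "\<not> thesis"
    then have "\<forall>i\<in>I. \<beta> i < 1 / card I" using that by force
    then have "sum \<beta> I < (\<Sum>i\<in>I. 1 / card I)"
      using \<open>I \<noteq> {}\<close> assms(1) by (intro sum_strict_mono) auto
    also have "\<dots> = 1" using \<open>I \<noteq> {}\<close> assms(1) by simp
    finally show False using assms(3) by simp
  qed
  define \<beta>' where "\<beta>' i = (\<beta> i - (if i = j then 1 - \<mu> else 0)) / \<mu>" for i
  have "\<forall>i\<in>I. 0 \<le> \<beta>' i"
    unfolding \<beta>'_def using assms j by (auto intro!: divide_nonneg_pos)
  moreover have "sum \<beta>' I = 1"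
    using assms j by (simp add: \<beta>'_def sum_divide_distrib[symmetric] sum_subtractf sum.delta)
  moreover have "\<mu> *\<^sub>R (\<Sum>i\<in>I. \<beta>' i *\<^sub>R c i) = (\<Sum>i\<in>I. \<beta> i *\<^sub>R c i) - (1 - \<mu>) *\<^sub>R c j"
  proof -
    have "\<mu> *\<^sub>R (\<Sum>i\<in>I. \<beta>' i *\<^sub>R c i) = (\<Sum>i\<in>I. \<beta> i *\<^sub>R c i - (if i = j then (1 - \<mu>) *\<^sub>R c i else 0))"
      unfolding \<beta>'_def scaleR_sum_right using assms by (intro sum.cong) (auto simp: scaleR_diff_left)
    then show ?thesis using assms(1) j(1) by (simp add: sum_subtractf sum.delta)
  qed
  ultimately show ?thesis using that j(1) by (simp add: algebra_simps)
qed

lemma convex_hull_perturbed_near: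
  fixes V V' :: "'i \<Rightarrow> 'a::real_normed_vector"
  assumes "finite J" "v \<in> convex hull (V ` J)"
    and "\<forall>j\<in>J. norm (V' j - (H + s *\<^sub>R V j)) \<le> \<eta>"
  shows "\<exists>x'\<in>convex hull (V' ` J). norm (x' - (H + s *\<^sub>R v)) \<le> \<eta>"
proof -
  obtain \<beta> where \<beta>: "\<forall>j\<in>J. 0 \<le> \<beta> j" "sum \<beta> J = 1" "v = (\<Sum>j\<in>J. \<beta> j *\<^sub>R V j)"
    using convex_hull_indexedE[OF assms(1,2)] .
  define x' where "x' = (\<Sum>j\<in>J. \<beta> j *\<^sub>R V' j)"
  have "x' - (H + s *\<^sub>R v) = (\<Sum>j\<in>J. \<beta> j *\<^sub>R (V' j - (H + s *\<^sub>R V j)))"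
    using \<beta> by (simp add: x'_def scaleR_diff_right scaleR_add_right sum_subtractf sum.distrib
        scaleR_sum_right scaleR_sum_left[symmetric] algebra_simps)
  then have "norm (x' - (H + s *\<^sub>R v)) \<le> (\<Sum>j\<in>J. \<beta> j * \<eta>)"
    using \<beta> assms(3) by (auto intro!: order_trans[OF norm_sum] sum_mono mult_left_mono)
  also have "\<dots> = \<eta>" using \<beta> by (simp add: sum_distrib_right[symmetric])
  finally show ?thesis
    using \<beta> assms(1) unfolding x'_def by (blast intro: convex_hull_indexedI)
qed

lemma mem_convex_hull_perturbed:
  fixes V V' :: "'i \<Rightarrow> 'a::euclidean_space"
  assumes J: "finite J" and "0 \<le> \<rho>" and ball: "cball y0 \<rho> \<subseteq> convex hull (V ` J)"
    and close: "\<forall>j\<in>J. norm (V' j - (H + s *\<^sub>R V j)) \<le> \<eta>"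
    and y: "norm (y - (H + s *\<^sub>R y0)) < s * \<rho> - \<eta>"
  shows "y \<in> convex hull (V' ` J)"
proof (rule ccontr)
  assume "y \<notin> convex hull (V' ` J)"
  moreover have "closed (convex hull (V' ` J))"
    using J by (intro compact_imp_closed finite_imp_compact_convex_hull) auto
  ultimately obtain a b where ab: "a \<bullet> y < b" "\<forall>x\<in>convex hull (V' ` J). b < a \<bullet> x"
    using separating_hyperplane_closed_point[OF convex_convex_hull] by blast
  have "y0 \<in> convex hull (V ` J)" using ball \<open>0 \<le> \<rho>\<close> by auto
  then obtain x0 where "x0 \<in> convex hull (V' ` J)"
    using convex_hull_perturbed_near[OF J _ close] by blast
  then have "a \<noteq> 0" using ab by fastforce
  define v where "v = y0 - (\<rho> / norm a) *\<^sub>R a"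
  have "v \<in> convex hull (V ` J)"
    using ball \<open>a \<noteq> 0\<close> \<open>0 \<le> \<rho>\<close> by (auto simp: v_def dist_norm subset_iff)
  then obtain x' where x': "x' \<in> convex hull (V' ` J)" "norm (x' - (H + s *\<^sub>R v)) \<le> \<eta>"
    using convex_hull_perturbed_near[OF J _ close] by blast
  have "a \<bullet> (x' - (H + s *\<^sub>R v)) \<le> norm a * \<eta>"
    using x'(2) by (intro order_trans[OF norm_cauchy_schwarz] mult_left_mono) auto
  moreover have "a \<bullet> v = a \<bullet> y0 - \<rho> * norm a"
    using \<open>a \<noteq> 0\<close> by (simp add: v_def inner_diff_right dot_square_norm power2_eq_square)
  moreover have "a \<bullet> ((H + s *\<^sub>R y0) - y) < norm a * (s * \<rho> - \<eta>)"
    using y \<open>a \<noteq> 0\<close> by (intro le_less_trans[OF norm_cauchy_schwarz])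
      (simp add: norm_minus_commute)
  ultimately have "a \<bullet> x' < a \<bullet> y"
    by (simp add: inner_diff_right inner_add_right algebra_simps)
  then show False using ab x'(1) by fastforce
qed

lemma interior_convex_hull_partial_sums:
  fixes g :: "nat \<Rightarrow> 'a::euclidean_space"
  assumes "aff_dim (g ` {..n}) = int DIM('a)" "(\<Sum>i\<le>n. g i) = 0"
  shows "interior (convex hull ((\<lambda>j. \<Sum>i<j. g i) ` {..n})) \<noteq> {}"
proof -
  define V where "V j = (\<Sum>i<j. g i)" for j
  let ?A = "affine hull (V ` {..n})"
  have "V 0 \<in> ?A" by (simp add: hull_inc)
  then have A: "subspace ?A" by (simp add: V_def subspace_affine)
  have "g i \<in> ?A" if "i \<le> n" for i
  proof (cases "i < n")
    case True
    then have "V (Suc i) \<in> ?A" "V i \<in> ?A" by (simp_all add: hull_inc)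
    then show ?thesis using A by (metis V_def add_diff_cancel_left' subspace_diff sum.lessThan_Suc)
  next
    case False
    then have "g i = - V n" using that assms(2) by (simp add: V_def eq_neg_iff_add_eq_0 lessThan_Suc_atMost[symmetric] add.commute)
    moreover have "V n \<in> ?A" by (simp add: hull_inc)
    ultimately show ?thesis using A by (simp add: subspace_neg)
  qed
  then have "affine hull (g ` {..n}) \<subseteq> ?A"
    by (intro hull_minimal) (auto simp: affine_affine_hull)
  then have "affine hull (convex hull (V ` {..n})) = UNIV"
    using affine_hull_UNIV[OF assms(1)] by auto
  then have "interior (convex hull (V ` {..n})) = rel_interior (convex hull (V ` {..n}))"
    by (simp add: rel_interior_interior)
  then show ?thesis by (simp add: V_def rel_interior_eq_empty)
qed

section \<open>The attractor is the convex hull\<close>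

lemma dist_ifs_map:
  fixes p :: "nat \<Rightarrow> 'a::real_normed_vector"
  assumes "0 \<le> lam"
  shows "dist (ifs_map lam p i x) (ifs_map lam p i y) = lam * dist x y"
proof -
  have "ifs_map lam p i x - ifs_map lam p i y = lam *\<^sub>R (x - y)"
    unfolding ifs_map_def by (simp add: algebra_simps)
  then show ?thesis using assms by (simp add: dist_norm)
qed

lemma ifs_invariant_compact_subset:
  fixes p :: "nat \<Rightarrow> 'a::euclidean_space"
  assumes "0 < lam" "lam < 1"
    and A: "compact A" "A \<noteq> {}" "A = (\<Union>i\<in>{0..n}. ifs_map lam p i ` A)"
    and B: "compact B" "B \<noteq> {}" "B = (\<Union>i\<in>{0..n}. ifs_map lam p i ` B)"
  shows "A \<subseteq> B"
proof -
  have "continuous_on A (\<lambda>a. infdist a B)" by (rule continuous_on_infdist) auto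
  then obtain a0 where a0: "a0 \<in> A" "\<forall>a\<in>A. infdist a B \<le> infdist a0 B"
    using continuous_attains_sup[OF A(1,2)] by blast
  obtain i a1 where ia: "i \<in> {0..n}" "a1 \<in> A" "a0 = ifs_map lam p i a1"
    using a0(1) A(3) by blast
  obtain b1 where b1: "b1 \<in> B" "infdist a1 B = dist a1 b1"
    using infdist_attains_inf[of B a1] B compact_imp_closed by blast
  have "ifs_map lam p i b1 \<in> B" using B(3) b1(1) ia(1) by blast
  then have "infdist a0 B \<le> dist a0 (ifs_map lam p i b1)" by (rule infdist_le)
  also have "\<dots> = lam * infdist a1 B" using ia b1 dist_ifs_map[OF less_imp_le[OF assms(1)]] by simp
  also have "\<dots> \<le> lam * infdist a0 B" using a0 ia assms(1) by (intro mult_left_mono) auto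
  finally have "infdist a0 B = 0"
    using assms(2) infdist_nonneg[of a0 B] by (simp add: mult_le_cancel_right1)
  then have "\<forall>a\<in>A. infdist a B = 0" using a0 by (metis infdist_nonneg order_antisym)
  then show ?thesis
    using in_closed_iff_infdist_zero[OF compact_imp_closed[OF B(1)] B(2)] by blast
qed

lemma convex_hull_ifs_invariant:
  fixes p :: "nat \<Rightarrow> 'a::euclidean_space"
  assumes "0 < lam" "lam < 1" "1 - lam \<le> 1 / (n + 1)"
  shows "convex hull (p ` {0..n}) = (\<Union>i\<in>{0..n}. ifs_map lam p i ` (convex hull (p ` {0..n})))"
proof
  let ?K = "convex hull (p ` {0..n})"
  show "?K \<subseteq> (\<Union>i\<in>{0..n}. ifs_map lam p i ` ?K)"
  proof
    fix y assume "y \<in> ?K"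
    then obtain \<beta> where \<beta>: "\<forall>i\<in>{0..n}. 0 \<le> \<beta> i" "sum \<beta> {0..n} = 1" "y = (\<Sum>i\<in>{0..n}. \<beta> i *\<^sub>R p i)"
      using convex_hull_indexedE by blast
    obtain j \<beta>' where j: "j \<in> {0..n}" "\<forall>i\<in>{0..n}. 0 \<le> \<beta>' i" "sum \<beta>' {0..n} = 1"
      "y = lam *\<^sub>R (\<Sum>i\<in>{0..n}. \<beta>' i *\<^sub>R p i) + (1 - lam) *\<^sub>R p j"
      using convex_combination_peel_vertex[of "{0..n}" \<beta> lam p] \<beta> assms by auto
    then have "y = ifs_map lam p j (\<Sum>i\<in>{0..n}. \<beta>' i *\<^sub>R p i)"
      by (simp add: ifs_map_def)
    then show "y \<in> (\<Union>i\<in>{0..n}. ifs_map lam p i ` ?K)"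
      using j convex_hull_indexedI[of "{0..n}" \<beta>' p] by blast
  qed
  show "(\<Union>i\<in>{0..n}. ifs_map lam p i ` ?K) \<subseteq> ?K"
  proof safe
    fix i x assume "i \<in> {0..n}" "x \<in> ?K"
    moreover have "p i \<in> ?K" using \<open>i \<in> {0..n}\<close> by (simp add: hull_inc)
    ultimately show "ifs_map lam p i x \<in> ?K"
      unfolding ifs_map_def using assms convex_convex_hull by (intro convexD) auto
  qed
qed

lemma attractor_eq_convex_hull:
  fixes p :: "nat \<Rightarrow> 'a::euclidean_space"
  assumes "0 < lam" "lam < 1" "1 - lam \<le> 1 / (n + 1)"
  shows "attractor lam p n = convex hull (p ` {0..n})"
  unfolding attractor_def
proof (rule the_equality)
  let ?K = "convex hull (p ` {0..n})"
  show K: "compact ?K \<and> ?K \<noteq> {} \<and> ?K = (\<Union>i\<in>{0..n}. ifs_map lam p i ` ?K)"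
    using convex_hull_ifs_invariant[OF assms] by (auto intro!: finite_imp_compact_convex_hull)
  fix X assume "compact X \<and> X \<noteq> {} \<and> X = (\<Union>i\<in>{0..n}. ifs_map lam p i ` X)"
  then show "X = ?K"
    using K ifs_invariant_compact_subset[OF assms(1,2), where n=n and p=p] by (meson subset_antisym)
qed

section \<open>Simply normal codings lie in the interior\<close>

lemma simply_normal_digit_occurs:
  assumes "simply_normal n k a" "k \<ge> 1" "i \<in> {0..n}"
  shows "\<exists>t. a t = i"
proof (rule ccontr)
  assume "\<nexists>t. a t = i"
  then have "\<not> (\<forall>i'<length (replicate k i). a (j + i') = replicate k i ! i')" for j
    using assms(2) by (metis add_0_right length_replicate nth_replicate less_le_trans zero_less_one)
  then have "occ_count (replicate k i) a m = 0" for m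
    by (simp add: occ_count_def)
  moreover have "(\<lambda>m. real (occ_count (replicate k i) a m) / real m) \<longlonglongrightarrow> 1 / real (n + 1) ^ k"
    using assms unfolding simply_normal_def by auto
  ultimately show False by (simp add: LIMSEQ_const_iff)
qed

lemma coding_map_simply_normal_in_interior:
  fixes p :: "nat \<Rightarrow> 'a::euclidean_space"
  assumes "aff_dim (p ` {0..n}) = int DIM('a)" "0 < lam" "lam < 1"
    and a: "\<forall>j. a j \<in> {0..n}" "simply_normal n k a" "k \<ge> 1"
  shows "coding_map lam p a \<in> interior (convex hull (p ` {0..n}))"
proof -
  define f where "f i r = (if a r = i then (1 - lam) * lam ^ r else 0)" for i r
  have "summable (\<lambda>r. (1 - lam) * lam ^ r)"
    using assms by (intro summable_mult summable_geometric) auto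
  then have f: "summable (f i)" for i
    by (rule summable_comparison_test'[where N=0]) (use assms in \<open>auto simp: f_def\<close>)
  define w where "w i = suminf (f i)" for i
  have "0 < w i" if i: "i \<in> {0..n}" for i
  proof -
    obtain t where "a t = i" using simply_normal_digit_occurs[OF a(2,3) i] by blast
    then show ?thesis
      unfolding w_def using assms by (intro suminf_pos2[OF f, of _ t]) (auto simp: f_def)
  qed
  moreover have "sum w {0..n} = 1"
  proof -
    have "sum w {0..n} = (\<Sum>r. \<Sum>i\<in>{0..n}. f i r)"
      unfolding w_def by (rule suminf_sum[symmetric]) (rule f)
    also have "\<dots> = (\<Sum>r. (1 - lam) * lam ^ r)"
      using a(1) by (simp add: f_def sum.delta)
    also have "\<dots> = 1"
      using assms by (simp add: suminf_mult suminf_geometric)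
    finally show ?thesis .
  qed
  moreover have "coding_map lam p a = (\<Sum>i\<in>{0..n}. w i *\<^sub>R p i)"
  proof -
    have "((1 - lam) * lam ^ r) *\<^sub>R p (a r) = (\<Sum>i\<in>{0..n}. f i r *\<^sub>R p i)" for r
      using a(1) by (simp add: f_def if_distrib[of "\<lambda>c. c *\<^sub>R _"] sum.delta cong: if_cong)
    then have "coding_map lam p a = (\<Sum>r. \<Sum>i\<in>{0..n}. f i r *\<^sub>R p i)"
      using coding_map_eq_suminf[OF assms(2,3) a(1), where p=p] by simp
    also have "\<dots> = (\<Sum>i\<in>{0..n}. w i *\<^sub>R p i)"
      unfolding w_def using f by (simp add: suminf_sum summable_scaleR_left suminf_scaleR_left)
    finally show ?thesis .
  qed
  ultimately show ?thesis
    unfolding interior_convex_hull_eq_positive_weights[OF finite_atLeastAtMost assms(1)] by blast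
qed

section \<open>A cyclic word in which all patterns are equidistributed\<close>

lemma sum_lessThan_mult:
  fixes h :: "nat \<Rightarrow> 'a::comm_monoid_add"
  shows "(\<Sum>v<a*b. h v) = (\<Sum>y<b. \<Sum>x<a. h (x + a*y))"
proof (induction b)
  case 0 then show ?case by simp
next
  case (Suc b)
  have "(\<Sum>v<a * Suc b. h v) = (\<Sum>v\<in>{0..<a*b}. h v) + (\<Sum>v\<in>{a*b..<a*b+a}. h v)"
    by (simp add: sum.atLeastLessThan_concat atLeast0LessThan[symmetric] algebra_simps)
  also have "(\<Sum>v\<in>{a*b..<a*b+a}. h v) = (\<Sum>x<a. h (x + a*b))"
  proof -
    have "(\<Sum>v\<in>{0+a*b..<a+a*b}. h v) = (\<Sum>x\<in>{0..<a}. h (x + a*b))"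
      by (rule sum.shift_bounds_nat_ivl)
    then show ?thesis by (simp add: atLeast0LessThan add.commute)
  qed
  finally show ?case using Suc by (simp add: atLeast0LessThan)
qed

definition digit :: "nat \<Rightarrow> nat \<Rightarrow> nat \<Rightarrow> nat" where
  "digit q i u = (u div q ^ i) mod q"

lemma digit_0_add_mult: "q > 0 \<Longrightarrow> x < q \<Longrightarrow> digit q 0 (x + q * y) = x"
  by (simp add: digit_def)

lemma digit_Suc_add_mult: "q > 0 \<Longrightarrow> x < q \<Longrightarrow> digit q (Suc i) (x + q * y) = digit q i y"
proof -
  assume q: "q > 0" "x < q"
  have "(x + q * y) div q ^ Suc i = ((x + q * y) div q) div q ^ i"
    by (simp add: div_mult2_eq)
  also have "(x + q * y) div q = y" using q by simp
  finally show ?thesis by (simp add: digit_def)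
qed

lemma digit_less: "q > 0 \<Longrightarrow> digit q i u < q"
  by (simp add: digit_def)

lemma card_eq_card_Suc_preimage:
  assumes "finite S"
  shows "card S = card {i. Suc i \<in> S} + (if 0 \<in> S then 1 else 0)"
proof -
  have "S = Suc ` {i. Suc i \<in> S} \<union> (S \<inter> {0})"
    by (auto, metis not0_implies_Suc image_eqI mem_Collect_eq)
  moreover have "card (Suc ` {i. Suc i \<in> S} \<union> (S \<inter> {0})) = card (Suc ` {i. Suc i \<in> S}) + card (S \<inter> {0})"
    using assms by (intro card_Un_disjoint) (auto intro: finite_subset[OF _ assms])
  ultimately show ?thesis by (auto simp: card_image Int_insert_right)
qed

lemma all_digits_add_mult_iff:
  assumes "q > 0" "x < q"
  shows "(\<forall>i\<in>S. digit q i (x + q * y) = c i) \<longleftrightarrow>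
    (0 \<in> S \<longrightarrow> x = c 0) \<and> (\<forall>i\<in>{i. Suc i \<in> S}. digit q i y = c (Suc i))"
proof -
  have "(\<forall>i\<in>S. digit q i (x + q * y) = c i) \<longleftrightarrow>
      (0 \<in> S \<longrightarrow> digit q 0 (x + q * y) = c 0) \<and> (\<forall>i. Suc i \<in> S \<longrightarrow> digit q (Suc i) (x + q * y) = c (Suc i))"
    by (metis not0_implies_Suc)
  then show ?thesis using assms by (simp add: digit_0_add_mult digit_Suc_add_mult)
qed

lemma count_digit_pattern:
  assumes "q > 0" "S \<subseteq> {..<N}" "\<forall>i\<in>S. c i < q"
  shows "(\<Sum>u<q^N. of_bool (\<forall>i\<in>S. digit q i u = c i)) = q ^ (N - card S)"
  using assms(2,3)
proof (induction N arbitrary: S c)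
  case (Suc N)
  define S' where "S' = {i. Suc i \<in> S}"
  have "S' \<subseteq> {..<N}" using Suc.prems unfolding S'_def by auto
  have "(\<Sum>x<q. of_bool (\<forall>i\<in>S. digit q i (x + q * y) = c i))
      = (\<Sum>x<q. of_bool (\<forall>i\<in>S'. digit q i y = c (Suc i)) * (of_bool (0 \<in> S \<longrightarrow> x = c 0) :: nat))" for y
    using all_digits_add_mult_iff[OF assms(1)] by (intro sum.cong refl) (auto simp: S'_def)
  then have "(\<Sum>x<q. of_bool (\<forall>i\<in>S. digit q i (x + q * y) = c i))
      = (of_bool (\<forall>i\<in>S'. digit q i y = c (Suc i)) :: nat) * (\<Sum>x<q. of_bool (0 \<in> S \<longrightarrow> x = c 0))" for y
    by (simp only: sum_distrib_left)
  moreover have "(\<Sum>x<q. of_bool (0 \<in> S \<longrightarrow> x = c 0)) = (if 0 \<in> S then 1 else q)"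
    using Suc.prems(2) by (cases "0 \<in> S") (simp_all add: sum.delta)
  ultimately have "(\<Sum>u<q ^ Suc N. of_bool (\<forall>i\<in>S. digit q i u = c i))
      = (\<Sum>y<q^N. of_bool (\<forall>i\<in>S'. digit q i y = c (Suc i))) * (if 0 \<in> S then 1 else q)"
    by (simp add: sum_lessThan_mult sum_distrib_right del: sum_of_bool_eq)
  also have "(\<Sum>y<q^N. of_bool (\<forall>i\<in>S'. digit q i y = c (Suc i))) = q ^ (N - card S')"
    using Suc.IH[OF \<open>S' \<subseteq> {..<N}\<close>, of "\<lambda>i. c (Suc i)"] Suc.prems unfolding S'_def by auto
  also have "q ^ (N - card S') * (if 0 \<in> S then 1 else q) = q ^ (Suc N - card S)"
  proof -
    have "card S' \<le> N" using card_mono[OF _ \<open>S' \<subseteq> {..<N}\<close>] by simp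
    moreover have "finite S" using Suc.prems(1) finite_subset by blast
    ultimately show ?thesis
      using card_eq_card_Suc_preimage[of S] by (auto simp: S'_def Suc_diff_le power_Suc)
  qed
  finally show ?case .
qed simp

lemma digit_add_pow_mult:
  assumes "q > 0" "x < q ^ m"
  shows "digit q i (x + q ^ m * y) = (if i < m then digit q i x else digit q (i - m) y)"
proof (cases "i < m")
  case True
  have "(x + q ^ m * y) div q ^ i = x div q ^ i + q ^ (m - i) * y"
  proof -
    have "q ^ m = q ^ i * q ^ (m - i)" using True by (simp add: power_add[symmetric])
    then have e: "x + q ^ m * y = x + q ^ i * (q ^ (m - i) * y)" by (simp add: mult.assoc)
    show ?thesis unfolding e using assms(1) by simp
  qed
  moreover have "q ^ (m - i) * y mod q = 0" using True by (simp add: power_eq_if)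
  ultimately show ?thesis using True unfolding digit_def by (simp add: mod_add_eq[symmetric])
next
  case False
  have qi: "q ^ i = q ^ m * q ^ (i - m)" using False by (simp add: power_add[symmetric])
  have "(x + q ^ m * y) div q ^ i = ((x + q ^ m * y) div q ^ m) div q ^ (i - m)"
    unfolding qi by (rule div_mult2_eq)
  also have "(x + q ^ m * y) div q ^ m = y" using assms by simp
  finally show ?thesis using False unfolding digit_def by simp
qed

lemma digit_mod_pow: "q > 0 \<Longrightarrow> i < M \<Longrightarrow> digit q i (x mod q ^ M) = digit q i x"
proof -
  assume a: "q > 0" "i < M"
  have "digit q i (x mod q^M + q^M*(x div q^M)) = (if i < M then digit q i (x mod q^M) else digit q (i-M) (x div q^M))"
    by (rule digit_add_pow_mult) (use a in auto)
  then show ?thesis using a by simp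
qed

lemma digit_Suc_div: "digit q (Suc i) v = digit q i (v div q)"
  by (simp add: digit_def div_mult2_eq)

lemma digits_eq_imp_eq:
  assumes "q > 0" "v < q ^ m" "v' < q ^ m" "\<forall>i<m. digit q i v = digit q i v'"
  shows "v = v'"
  using assms(2-4)
proof (induction m arbitrary: v v')
  case 0 then show ?case by simp
next
  case (Suc m)
  have v: "v = v mod q + q * (v div q)" "v' = v' mod q + q * (v' div q)" by simp_all
  have "v mod q = v' mod q" using Suc.prems(3)[rule_format, of 0] by (simp add: digit_def)
  moreover have "v div q = v' div q"
  proof (rule Suc.IH)
    show "v div q < q ^ m" "v' div q < q ^ m" using Suc.prems assms(1)
      by (auto simp: div_less_iff_less_mult mult.commute)
    show "\<forall>i<m. digit q i (v div q) = digit q i (v' div q)"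
    proof safe
      fix i assume "i < m"
      then have "digit q (Suc i) v = digit q (Suc i) v'" using Suc.prems by auto
      then show "digit q i (v div q) = digit q i (v' div q)"
        by (simp add: digit_Suc_div)
    qed
  qed
  ultimately show ?case using v by metis
qed

lemma sum_digit:
  fixes g :: "nat \<Rightarrow> 'a::real_vector"
  assumes "q > 0" "e < N"
  shows "(\<Sum>u<q^N. g (digit q e u)) = real (q ^ (N - 1)) *\<^sub>R (\<Sum>i<q. g i)"
proof -
  have "(\<Sum>u<q^N. g (digit q e u)) = (\<Sum>i<q. \<Sum>u | u \<in> {..<q^N} \<and> digit q e u = i. g (digit q e u))"
    using assms(1) by (intro sum.group[symmetric]) (auto simp: digit_less)
  also have "\<dots> = (\<Sum>i<q. real (q ^ (N - 1)) *\<^sub>R g i)"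
  proof (intro sum.cong refl)
    fix i assume "i \<in> {..<q}"
    then have "(\<Sum>u<q^N. of_bool (\<forall>i'\<in>{e}. digit q i' u = i)) = q ^ (N - card {e})"
      using assms by (intro count_digit_pattern) auto
    then have "card {u. u \<in> {..<q^N} \<and> digit q e u = i} = q ^ (N - 1)"
      by (simp add: Int_def)
    then show "(\<Sum>u | u \<in> {..<q^N} \<and> digit q e u = i. g (digit q e u)) = real (q ^ (N - 1)) *\<^sub>R g i"
      by (simp add: sum_constant_scaleR)
  qed
  finally show ?thesis by (simp add: scaleR_sum_right)
qed

definition counter_word :: "nat \<Rightarrow> nat \<Rightarrow> nat \<Rightarrow> nat" where
  "counter_word q N t = digit q (t mod N) (t div N)"

lemma counter_word_add_mult: "e < N \<Longrightarrow> counter_word q N (e + N * u) = digit q e u"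
  by (simp add: counter_word_def)

lemma counter_word_less: "q > 0 \<Longrightarrow> counter_word q N t < q"
  by (simp add: counter_word_def digit_less)

lemma sum_counter_word:
  fixes g :: "nat \<Rightarrow> 'a::real_vector"
  assumes "q > 0"
  shows "(\<Sum>t<N * q^N. g (counter_word q N t)) = real (N * q ^ (N - 1)) *\<^sub>R (\<Sum>i<q. g i)"
proof -
  have "(\<Sum>t<N * q^N. g (counter_word q N t)) = (\<Sum>u<q^N. \<Sum>e<N. g (counter_word q N (e + N * u)))"
    by (rule sum_lessThan_mult)
  also have "\<dots> = (\<Sum>u<q^N. \<Sum>e<N. g (digit q e u))"
    by (intro sum.cong refl) (simp add: counter_word_add_mult)
  also have "\<dots> = (\<Sum>e<N. \<Sum>u<q^N. g (digit q e u))" by (rule sum.swap)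
  also have "\<dots> = (\<Sum>e<N. real (q ^ (N - 1)) *\<^sub>R (\<Sum>i<q. g i))"
    using assms by (intro sum.cong refl sum_digit) auto
  finally show ?thesis by (simp add: sum_constant_scaleR scaleR_scaleR)
qed

lemma sum_counter_word_prefix:
  fixes g :: "nat \<Rightarrow> 'a::real_vector"
  assumes "q > 0" "N > 0" "j \<le> q" "(\<Sum>i<q. g i) = 0"
  shows "(\<Sum>t<N * (q^(N-1) * j). g (counter_word q N t)) = real (q ^ (N - 1)) *\<^sub>R (\<Sum>b<j. g b)"
proof -
  have "(\<Sum>t<N * (q^(N-1) * j). g (counter_word q N t)) = (\<Sum>u<q^(N-1) * j. \<Sum>e<N. g (counter_word q N (e + N * u)))"
    by (rule sum_lessThan_mult)
  also have "\<dots> = (\<Sum>e<N. \<Sum>u<q^(N-1) * j. g (digit q e u))"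
    by (subst sum.swap) (intro sum.cong refl, simp add: counter_word_add_mult)
  also have "\<dots> = (\<Sum>e<N. \<Sum>y<j. \<Sum>x<q^(N-1). g (digit q e (x + q^(N-1) * y)))"
    by (intro sum.cong refl sum_lessThan_mult)
  also have "\<dots> = (\<Sum>e<N. if e < N - 1 then 0 else real (q ^ (N - 1)) *\<^sub>R (\<Sum>b<j. g b))"
  proof (intro sum.cong refl)
    fix e assume e: "e \<in> {..<N}"
    show "(\<Sum>y<j. \<Sum>x<q^(N-1). g (digit q e (x + q^(N-1) * y))) =
      (if e < N - 1 then 0 else real (q ^ (N - 1)) *\<^sub>R (\<Sum>b<j. g b))"
    proof (cases "e < N - 1")
      case True
      have "(\<Sum>y<j. \<Sum>x<q^(N-1). g (digit q e (x + q^(N-1) * y))) = (\<Sum>y<j. \<Sum>x<q^(N-1). g (digit q e x))"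
        using True assms(1) by (intro sum.cong refl) (simp add: digit_add_pow_mult)
      also have "\<dots> = 0" using True assms by (simp add: sum_digit)
      finally show ?thesis using True by simp
    next
      case False
      then have eN: "e = N - 1" using e by auto
      have "(\<Sum>y<j. \<Sum>x<q^(N-1). g (digit q e (x + q^(N-1) * y))) = (\<Sum>y<j. \<Sum>x<q^(N-1). g y)"
      proof (intro sum.cong refl)
        fix y x assume "y \<in> {..<j}" "x \<in> {..<q^(N-1)}"
        then show "g (digit q e (x + q^(N-1) * y)) = g y"
          using eN assms by (simp add: digit_add_pow_mult digit_def)
      qed
      also have "\<dots> = real (q ^ (N - 1)) *\<^sub>R (\<Sum>b<j. g b)"
        by (simp add: scaleR_sum_right sum_constant_scaleR)
      finally show ?thesis using False by simp
    qed
  qed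
  also have "\<dots> = real (q ^ (N - 1)) *\<^sub>R (\<Sum>b<j. g b)"
  proof -
    have "(\<Sum>e<N. if e < N - 1 then 0 else real (q ^ (N - 1)) *\<^sub>R (\<Sum>b<j. g b))
       = (\<Sum>e\<in>{..<N}. if e = N - 1 then real (q ^ (N - 1)) *\<^sub>R (\<Sum>b<j. g b) else 0)"
      using assms(2) by (intro sum.cong refl) auto
    also have "\<dots> = real (q ^ (N - 1)) *\<^sub>R (\<Sum>b<j. g b)" using assms(2) by (simp add: sum.delta)
    finally show ?thesis .
  qed
  finally show ?thesis .
qed

lemma counter_word_mod_period:
  assumes "q > 0" "N > 0"
  shows "counter_word q N (t mod (N * q ^ N)) = counter_word q N t"
proof -
  have "t mod (N * q ^ N) = (t div N) mod q ^ N * N + t mod N"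
    by (simp add: mod_mult2_eq algebra_simps)
  then show ?thesis
    using assms by (simp add: counter_word_def digit_mod_pow)
qed

lemma counter_word_window_letter:
  assumes "q > 0" "e < N" "i < N"
  shows "counter_word q N ((e + N * u + i) mod (N * q ^ N)) =
    (if e + i < N then digit q (e + i) u else digit q (e + i - N) (u + 1))"
proof -
  have "counter_word q N (e + N * u + i) =
    (if e + i < N then digit q (e + i) u else digit q (e + i - N) (u + 1))"
  proof (cases "e + i < N")
    case False
    then have "e + N * u + i = (e + i - N) + N * (u + 1)" "e + i - N < N" using assms by auto
    then show ?thesis using False by (simp only: counter_word_add_mult) simp
  qed (simp add: counter_word_add_mult[symmetric] add_ac)
  then show ?thesis using assms by (simp add: counter_word_mod_period)
qed

lemma Suc_mod_eq_iff:
  assumes "(M::nat) > 0" "v0 < M"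
  shows "(a + 1) mod M = v0 \<longleftrightarrow> a mod M = (v0 + M - 1) mod M"
proof -
  have "(a + 1) mod M = (a mod M + 1) mod M" by (metis mod_add_left_eq)
  moreover have "a mod M < M" using assms by simp
  ultimately show ?thesis
  proof (cases "a mod M + 1 < M")
    case True
    then show ?thesis using \<open>(a + 1) mod M = (a mod M + 1) mod M\<close> assms
      by (cases v0) (auto simp: mod_add_self2)
  next
    case False
    then have am: "a mod M = M - 1" using \<open>a mod M < M\<close> by simp
    then have "(a + 1) mod M = 0" using \<open>(a + 1) mod M = (a mod M + 1) mod M\<close> assms by simp
    then show ?thesis using am assms by (cases v0) auto
  qed
qed

lemma digits_eq_iff_mod:
  assumes "q > 0"
  shows "(\<forall>i<m. digit q i x = digit q i y) \<longleftrightarrow> x mod q ^ m = y mod q ^ m"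
proof
  assume "\<forall>i<m. digit q i x = digit q i y"
  then show "x mod q ^ m = y mod q ^ m"
    using assms by (intro digits_eq_imp_eq[of q _ m]) (simp_all add: digit_mod_pow)
qed (metis assms digit_mod_pow)

lemma exists_digits:
  assumes "q > 0" "\<forall>i<m. c i < q"
  obtains v where "v < q ^ m" "\<forall>i<m. digit q i v = c i"
proof -
  have "(\<Sum>u<q^m. of_bool (\<forall>i\<in>{..<m}. digit q i u = c i)) = q ^ (m - card {..<m})"
    using assms by (intro count_digit_pattern) auto
  then have "card ({..<q^m} \<inter> {u. \<forall>i\<in>{..<m}. digit q i u = c i}) = 1"
    by simp
  then have "{..<q^m} \<inter> {u. \<forall>i\<in>{..<m}. digit q i u = c i} \<noteq> {}"
    by auto
  then show ?thesis using that by blast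
qed

lemma all_less_split:
  fixes k l :: nat
  assumes "l \<le> k"
  shows "(\<forall>i<k. P i) \<longleftrightarrow> (\<forall>i<l. P i) \<and> (\<forall>i<k - l. P (l + i))"
proof
  assume "(\<forall>i<l. P i) \<and> (\<forall>i<k - l. P (l + i))"
  moreover have "i = l + (i - l) \<and> i - l < k - l" if "\<not> i < l" "i < k" for i
    using that by linarith
  ultimately show "\<forall>i<k. P i" by metis
qed (use assms in auto)

lemma ball_atLeastLessThan_add:
  fixes e k :: nat
  shows "(\<forall>i\<in>{e..<e + k}. P i) \<longleftrightarrow> (\<forall>i<k. P (e + i))"
proof -
  have "{e..<e + k} = (+) e ` {0..<k}" by (simp add: add.commute)
  then show ?thesis by (auto simp: atLeast0LessThan)
qed

lemma count_straddling_window: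
  assumes q: "q > 0" and "e < N" "N < e + k" "k \<le> N" and \<beta>: "\<forall>i<k. \<beta> i < q"
  shows "(\<Sum>u<q^N. of_bool ((\<forall>i<N - e. digit q (e + i) u = \<beta> i) \<and>
            (\<forall>i<k - (N - e). digit q i (u + 1) = \<beta> (N - e + i)))) = q ^ (N - k)"
proof -
  define l where "l = N - e"
  define m where "m = k - l"
  have lm: "l + m = k" "m \<le> e" using assms unfolding l_def m_def by auto
  obtain v where v: "v < q ^ m" "\<forall>i<m. digit q i v = \<beta> (l + i)"
    using exists_digits[OF q, of m "\<lambda>i. \<beta> (l + i)"] \<beta> lm by auto
  define r where "r = (v + q ^ m - 1) mod q ^ m"
  define S where "S = {..<m} \<union> {e..<N}"
  define c where "c i = (if i < m then digit q i r else \<beta> (i - e))" for i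
  have "(\<forall>i<m. digit q i (u + 1) = \<beta> (l + i)) \<longleftrightarrow> (\<forall>i<m. digit q i u = digit q i r)" for u
  proof -
    have "(\<forall>i<m. digit q i (u + 1) = \<beta> (l + i)) \<longleftrightarrow> (u + 1) mod q ^ m = v"
      using digits_eq_iff_mod[OF q, of m "u + 1" v] v by simp
    also have "\<dots> \<longleftrightarrow> u mod q ^ m = r mod q ^ m"
      using Suc_mod_eq_iff[of "q ^ m" v u] v q by (simp add: r_def)
    finally show ?thesis using digits_eq_iff_mod[OF q] by simp
  qed
  moreover have "(\<forall>i<l. digit q (e + i) u = \<beta> i) \<longleftrightarrow> (\<forall>i\<in>{e..<N}. digit q i u = \<beta> (i - e))" for u
    using ball_atLeastLessThan_add[of e l "\<lambda>i. digit q i u = \<beta> (i - e)"] assms(2) by (simp add: l_def)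
  ultimately have "((\<forall>i<l. digit q (e + i) u = \<beta> i) \<and> (\<forall>i<m. digit q i (u + 1) = \<beta> (l + i)))
      \<longleftrightarrow> (\<forall>i\<in>S. digit q i u = c i)" for u
    using lm by (auto simp: S_def c_def)
  then have "(\<Sum>u<q^N. of_bool ((\<forall>i<l. digit q (e + i) u = \<beta> i) \<and> (\<forall>i<m. digit q i (u + 1) = \<beta> (l + i))))
      = (\<Sum>u<q^N. of_bool (\<forall>i\<in>S. digit q i u = c i))"
    by simp
  also have "\<dots> = q ^ (N - card S)"
    using q \<beta> lm assms(2) by (intro count_digit_pattern) (auto simp: S_def c_def digit_less l_def)
  also have "card S = card {..<m} + card {e..<N}"
    unfolding S_def using lm by (intro card_Un_disjoint) auto
  also have "\<dots> = k"
    using lm assms(2) by (simp add: l_def)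
  finally show ?thesis unfolding l_def m_def .
qed

lemma counter_word_window_count:
  assumes q: "q > 0" and "N > 0" "k \<le> N" and \<beta>: "\<forall>i<k. \<beta> i < q"
  shows "(\<Sum>t<N * q^N. of_bool (\<forall>i<k. counter_word q N ((t + i) mod (N * q ^ N)) = \<beta> i)) = N * q ^ (N - k)"
proof -
  have "(\<Sum>u<q^N. of_bool (\<forall>i<k. counter_word q N ((e + N * u + i) mod (N * q ^ N)) = \<beta> i)) = q ^ (N - k)"
    if e: "e < N" for e
  proof (cases "e + k \<le> N")
    case True
    then have "(\<forall>i<k. counter_word q N ((e + N * u + i) mod (N * q ^ N)) = \<beta> i) \<longleftrightarrow>
        (\<forall>i\<in>{e..<e+k}. digit q i u = \<beta> (i - e))" for u
      using counter_word_window_letter[OF q e] assms(3) ball_atLeastLessThan_add[of e k] by auto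
    moreover have "(\<Sum>u<q^N. of_bool (\<forall>i\<in>{e..<e+k}. digit q i u = \<beta> (i - e))) = q ^ (N - card {e..<e+k})"
      using True \<beta> q by (intro count_digit_pattern) auto
    ultimately show ?thesis by simp
  next
    case False
    have "(\<forall>i<k. counter_word q N ((e + N * u + i) mod (N * q ^ N)) = \<beta> i) \<longleftrightarrow>
        (\<forall>i<N - e. counter_word q N ((e + N * u + i) mod (N * q ^ N)) = \<beta> i) \<and>
        (\<forall>i<k - (N - e). counter_word q N ((e + N * u + (N - e + i)) mod (N * q ^ N)) = \<beta> (N - e + i))" for u
      by (rule all_less_split) (use False in simp)
    also have "\<dots> u \<longleftrightarrow>
        (\<forall>i<N - e. digit q (e + i) u = \<beta> i) \<and> (\<forall>i<k - (N - e). digit q i (u + 1) = \<beta> (N - e + i))" for u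
    proof -
      have "counter_word q N ((e + N * u + i) mod (N * q ^ N)) = digit q (e + i) u" if "i < N - e" for i
        using counter_word_window_letter[OF q e, of i u] that by (simp add: less_diff_conv add.commute)
      moreover have "counter_word q N ((e + N * u + (N - e + i)) mod (N * q ^ N)) = digit q i (u + 1)"
        if "i < k - (N - e)" for i
        using counter_word_window_letter[OF q e, of "N - e + i" u] that assms(3) e by simp
      ultimately show ?thesis by simp
    qed
    finally show ?thesis
      using count_straddling_window[OF q e _ assms(3) \<beta>] False by simp
  qed
  then have "(\<Sum>e<N. \<Sum>u<q^N. of_bool (\<forall>i<k. counter_word q N ((e + N * u + i) mod (N * q ^ N)) = \<beta> i))
      = (\<Sum>e<N. q ^ (N - k))"
    by (intro sum.cong refl) (simp del: sum_of_bool_eq)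
  then show ?thesis
    by (simp del: sum_of_bool_eq add: sum_lessThan_mult[where a=N] sum.swap[where A="{..<q^N}"])
qed

lemma sum_lessThan_split_at:
  fixes f :: "nat \<Rightarrow> 'a::comm_monoid_add"
  assumes "m \<le> L"
  shows "(\<Sum>r<L. f r) = (\<Sum>r\<in>{0..<m}. f r) + (\<Sum>r\<in>{m..<L}. f r)"
  using sum.atLeastLessThan_concat[of 0 m L f] assms by (simp add: atLeast0LessThan)

lemma sum_rotate_mod:
  fixes f :: "nat \<Rightarrow> 'a::comm_monoid_add"
  assumes "R < L"
  shows "(\<Sum>r<L. f ((r + R) mod L)) = (\<Sum>t<L. f t)"
proof -
  have "(\<Sum>r<L. f ((r + R) mod L)) = (\<Sum>r\<in>{0..<L-R}. f ((r + R) mod L)) + (\<Sum>r\<in>{L-R..<L}. f ((r + R) mod L))"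
    by (rule sum_lessThan_split_at) simp
  also have "(\<Sum>r\<in>{0..<L-R}. f ((r + R) mod L)) = (\<Sum>r\<in>{0..<L-R}. f (r + R))"
    by (intro sum.cong refl) auto
  also have "\<dots> = (\<Sum>t\<in>{0+R..<(L-R)+R}. f t)" by (rule sum.shift_bounds_nat_ivl[symmetric])
  also have "(\<Sum>r\<in>{L-R..<L}. f ((r + R) mod L)) = (\<Sum>r\<in>{0+(L-R)..<R+(L-R)}. f (r + R - L))"
  proof (intro sum.cong)
    show "{L-R..<L} = {0+(L-R)..<R+(L-R)}" using assms by auto
  next
    fix r assume "r \<in> {0+(L-R)..<R+(L-R)}"
    then have "L \<le> r + R" "r + R - L < L" using assms by auto
    then show "f ((r + R) mod L) = f (r + R - L)" by (simp add: le_mod_geq)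
  qed
  also have "\<dots> = (\<Sum>t\<in>{0..<R}. f (t + (L - R) + R - L))" by (rule sum.shift_bounds_nat_ivl)
  also have "\<dots> = (\<Sum>t\<in>{0..<R}. f t)" using assms by (intro sum.cong refl) auto
  finally show ?thesis using assms
    by (simp add: add.commute sum.atLeastLessThan_concat atLeast0LessThan[symmetric])
qed

lemma sum_weighted_rotate_mod:
  fixes h :: "nat \<Rightarrow> 'a::real_vector"
  assumes "R < L"
  shows "(\<Sum>r<L. real r *\<^sub>R h ((r + R) mod L)) =
    (\<Sum>t<L. real t *\<^sub>R h t) - real R *\<^sub>R (\<Sum>t<L. h t) + real L *\<^sub>R (\<Sum>t<R. h t)"
proof -
  have "(\<Sum>r<L. real r *\<^sub>R h ((r + R) mod L)) = (\<Sum>r\<in>{0..<L-R}. real r *\<^sub>R h ((r + R) mod L)) + (\<Sum>r\<in>{L-R..<L}. real r *\<^sub>R h ((r + R) mod L))"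
    by (rule sum_lessThan_split_at) simp
  also have "(\<Sum>r\<in>{0..<L-R}. real r *\<^sub>R h ((r + R) mod L)) = (\<Sum>r\<in>{0..<L-R}. real r *\<^sub>R h (r + R))"
    by (intro sum.cong refl) auto
  also have "\<dots> = (\<Sum>t\<in>{0+R..<(L-R)+R}. real (t - R) *\<^sub>R h t)"
    by (subst sum.shift_bounds_nat_ivl) simp
  also have "\<dots> = (\<Sum>t\<in>{R..<L}. real t *\<^sub>R h t) - real R *\<^sub>R (\<Sum>t\<in>{R..<L}. h t)"
    using assms by (simp add: of_nat_diff scaleR_diff_left sum_subtractf scaleR_sum_right)
  also have "(\<Sum>r\<in>{L-R..<L}. real r *\<^sub>R h ((r + R) mod L)) = (\<Sum>r\<in>{0+(L-R)..<R+(L-R)}. real r *\<^sub>R h (r + R - L))"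
  proof (intro sum.cong)
    show "{L-R..<L} = {0+(L-R)..<R+(L-R)}" using assms by auto
  next
    fix r assume "r \<in> {0+(L-R)..<R+(L-R)}"
    then have "L \<le> r + R" "r + R - L < L" using assms by auto
    then show "real r *\<^sub>R h ((r + R) mod L) = real r *\<^sub>R h (r + R - L)" by (simp add: le_mod_geq)
  qed
  also have "\<dots> = (\<Sum>t\<in>{0..<R}. real (t + (L - R)) *\<^sub>R h (t + (L - R) + R - L))" by (rule sum.shift_bounds_nat_ivl)
  also have "\<dots> = (\<Sum>t\<in>{0..<R}. real t *\<^sub>R h t + real L *\<^sub>R h t - real R *\<^sub>R h t)"
    using assms by (intro sum.cong refl) (auto simp: of_nat_diff algebra_simps)
  also have "\<dots> = (\<Sum>t\<in>{0..<R}. real t *\<^sub>R h t) + real L *\<^sub>R (\<Sum>t\<in>{0..<R}. h t) - real R *\<^sub>R (\<Sum>t\<in>{0..<R}. h t)"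
    by (simp add: sum.distrib sum_subtractf scaleR_sum_right)
  finally have "(\<Sum>r<L. real r *\<^sub>R h ((r + R) mod L)) =
     ((\<Sum>t\<in>{R..<L}. real t *\<^sub>R h t) + (\<Sum>t\<in>{0..<R}. real t *\<^sub>R h t))
     - real R *\<^sub>R ((\<Sum>t\<in>{R..<L}. h t) + (\<Sum>t\<in>{0..<R}. h t)) + real L *\<^sub>R (\<Sum>t\<in>{0..<R}. h t)"
    by (simp add: algebra_simps)
  also have "(\<Sum>t\<in>{R..<L}. real t *\<^sub>R h t) + (\<Sum>t\<in>{0..<R}. real t *\<^sub>R h t) = (\<Sum>t<L. real t *\<^sub>R h t)"
    using assms by (simp add: add.commute sum.atLeastLessThan_concat atLeast0LessThan[symmetric])
  also have "(\<Sum>t\<in>{R..<L}. h t) + (\<Sum>t\<in>{0..<R}. h t) = (\<Sum>t<L. h t)"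
    using assms by (simp add: add.commute sum.atLeastLessThan_concat atLeast0LessThan[symmetric])
  finally show ?thesis by (simp add: atLeast0LessThan)
qed

definition rotated_word :: "nat \<Rightarrow> nat \<Rightarrow> nat \<Rightarrow> nat \<Rightarrow> nat" where
  "rotated_word q N j r = counter_word q N ((r + N * (q ^ (N - 1) * j)) mod (N * q ^ N))"

lemma rotated_word_less: "q > 0 \<Longrightarrow> rotated_word q N j r < q"
  by (simp add: rotated_word_def counter_word_less)

lemma rotation_offset_less: assumes "q > 0" "N > 0" "j < q" shows "N * (q ^ (N - 1) * j) < N * q ^ N"
proof -
  have "q ^ (N - 1) * j < q ^ (N - 1) * q" using assms by simp
  also have "q ^ (N - 1) * q = q ^ N" using assms by (metis Suc_diff_1 power_Suc2)
  finally show ?thesis using assms by simp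
qed

lemma rotated_word_initial_zero:
  assumes "q > 0" "N > 0" "j < q" "r < N - 1"
  shows "rotated_word q N j r = 0"
proof -
  have lt: "r + N * (q ^ (N - 1) * j) < N * q ^ N"
  proof -
    have "j + 1 \<le> q" using assms by simp
    then have "q ^ (N - 1) * (j + 1) \<le> q ^ (N - 1) * q" by (rule mult_left_mono) simp
    also have "q ^ (N - 1) * q = q ^ N" using assms by (metis Suc_diff_1 power_Suc2)
    finally have A: "N * (q ^ (N - 1) * (j + 1)) \<le> N * q ^ N" by simp
    have B: "N \<le> N * q ^ (N - 1)" using assms by simp
    have E: "N * (q ^ (N - 1) * (j + 1)) = N * (q ^ (N - 1) * j) + N * q ^ (N - 1)"
      by (simp add: algebra_simps)
    have "r < N" using assms by simp
    then show ?thesis using A B E by linarith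
  qed
  have rN: "r < N" using assms by simp
  have "rotated_word q N j r = digit q r (q ^ (N - 1) * j)"
    unfolding rotated_word_def using lt counter_word_add_mult[OF rN] by simp
  also have "\<dots> = 0"
  proof -
    have "q ^ (N - 1) = q ^ r * q ^ (N - 1 - r)" using assms by (simp add: power_add[symmetric])
    then have "q ^ (N - 1) * j div q ^ r = q ^ (N - 1 - r) * j" using assms by simp
    moreover have "q ^ (N - 1 - r) * j mod q = 0"
    proof -
      obtain d where d: "N - 1 - r = Suc d" using assms by (metis Suc_diff_Suc zero_less_diff)
      have e: "q ^ (N - 1 - r) * j = q * (q ^ d * j)" unfolding d by simp
      show ?thesis unfolding e by simp
    qed
    ultimately show ?thesis by (simp add: digit_def)
  qed
  finally show ?thesis .
qed

lemma rotated_word_window_count: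
  assumes q: "q > 0" and N: "N > 0" and k: "k \<le> N" and \<beta>: "\<forall>i<k. \<beta> i < q" and j: "j < q"
  shows "(\<Sum>r<N * q^N. of_bool (\<forall>i<k. rotated_word q N j ((r + i) mod (N * q ^ N)) = \<beta> i)) = N * q ^ (N - k)"
proof -
  let ?L = "N * q ^ N" and ?R = "N * (q ^ (N - 1) * j)"
  define P where "P t = (of_bool (\<forall>i<k. counter_word q N ((t + i) mod ?L) = \<beta> i) :: nat)" for t
  have "(\<Sum>r<?L. of_bool (\<forall>i<k. rotated_word q N j ((r + i) mod ?L) = \<beta> i)) = (\<Sum>r<?L. P ((r + ?R) mod ?L))"
  proof (intro sum.cong refl)
    fix r
    have "rotated_word q N j ((r + i) mod ?L) = counter_word q N (((r + ?R) mod ?L + i) mod ?L)" for i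
      unfolding rotated_word_def mod_add_left_eq by (simp add: add_ac)
    then show "of_bool (\<forall>i<k. rotated_word q N j ((r + i) mod ?L) = \<beta> i) = P ((r + ?R) mod ?L)"
      unfolding P_def by simp
  qed
  also have "\<dots> = (\<Sum>t<?L. P t)" by (rule sum_rotate_mod[OF rotation_offset_less[OF q N j]])
  also have "\<dots> = N * q ^ (N - k)" unfolding P_def by (rule counter_word_window_count[OF q N k \<beta>])
  finally show ?thesis .
qed

lemma sum_rotated_word:
  fixes g :: "nat \<Rightarrow> 'a::real_vector"
  assumes q: "q > 0" and N: "N > 0" and j: "j < q"
  shows "(\<Sum>r<N * q^N. g (rotated_word q N j r)) = real (N * q ^ (N - 1)) *\<^sub>R (\<Sum>i<q. g i)"
proof -
  have "(\<Sum>r<N * q^N. g (rotated_word q N j r)) = (\<Sum>t<N * q^N. g (counter_word q N t))"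
    unfolding rotated_word_def by (rule sum_rotate_mod[OF rotation_offset_less[OF q N j]])
  also have "\<dots> = real (N * q ^ (N - 1)) *\<^sub>R (\<Sum>i<q. g i)" by (rule sum_counter_word[OF q])
  finally show ?thesis .
qed

lemma sum_weighted_rotated_word:
  fixes g :: "nat \<Rightarrow> 'a::real_vector"
  assumes q: "q > 0" and N: "N > 0" and j: "j < q" and g0: "(\<Sum>i<q. g i) = 0"
  shows "(\<Sum>r<N * q^N. real r *\<^sub>R g (rotated_word q N j r)) =
     (\<Sum>t<N * q^N. real t *\<^sub>R g (counter_word q N t)) + real (N * q ^ N) *\<^sub>R (real (q ^ (N - 1)) *\<^sub>R (\<Sum>b<j. g b))"
proof -
  let ?L = "N * q ^ N" and ?R = "N * (q ^ (N - 1) * j)"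
  have "(\<Sum>r<?L. real r *\<^sub>R g (rotated_word q N j r)) = (\<Sum>r<?L. real r *\<^sub>R (\<lambda>t. g (counter_word q N t)) ((r + ?R) mod ?L))"
    unfolding rotated_word_def by simp
  also have "\<dots> = (\<Sum>t<?L. real t *\<^sub>R g (counter_word q N t)) - real ?R *\<^sub>R (\<Sum>t<?L. g (counter_word q N t)) + real ?L *\<^sub>R (\<Sum>t<?R. g (counter_word q N t))"
    by (rule sum_weighted_rotate_mod[OF rotation_offset_less[OF q N j]])
  also have "(\<Sum>t<?L. g (counter_word q N t)) = 0" using sum_counter_word[OF q, of g N] g0 by simp
  also have "(\<Sum>t<?R. g (counter_word q N t)) = real (q ^ (N - 1)) *\<^sub>R (\<Sum>b<j. g b)"
    using sum_counter_word_prefix[OF q N _ g0, of j] j by simp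
  finally show ?thesis by simp
qed

section \<open>Concatenations of blocks\<close>

lemma card_less_add:
  fixes m r :: nat
  shows "card {t. t < m + r \<and> P t} = card {t. t < m \<and> P t} + card {e. e < r \<and> P (m + e)}"
proof -
  have split: "{t. t < m + r \<and> P t} = {t. t < m \<and> P t} \<union> {t. m \<le> t \<and> t < m + r \<and> P t}"
    by auto
  have shift: "{t. m \<le> t \<and> t < m + r \<and> P t} = (+) m ` {e. e < r \<and> P (m + e)}"
  proof (intro set_eqI iffI)
    fix t assume "t \<in> {t. m \<le> t \<and> t < m + r \<and> P t}"
    then show "t \<in> (+) m ` {e. e < r \<and> P (m + e)}" by (intro image_eqI[of _ _ "t - m"]) auto
  qed auto
  have "card {t. t < m + r \<and> P t} = card {t. t < m \<and> P t} + card {t. m \<le> t \<and> t < m + r \<and> P t}"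
    unfolding split by (rule card_Un_disjoint) auto
  also have "card {t. m \<le> t \<and> t < m + r \<and> P t} = card {e. e < r \<and> P (m + e)}"
    unfolding shift by (simp add: card_image)
  finally show ?thesis .
qed

lemma card_less_block_counts:
  assumes "\<And>J. card {e. e < L \<and> P (s + J * L + e)} = c"
  shows "card {t. t < s + J * L \<and> P t} = card {t. t < s \<and> P t} + J * c"
proof (induction J)
  case (Suc J)
  have "card {t. t < s + J * L + L \<and> P t} = card {t. t < s \<and> P t} + Suc J * c"
    using Suc card_less_add[of "s + J * L" L P] assms[of J] by simp
  moreover have "s + Suc J * L = s + J * L + L" by simp
  ultimately show ?case by (simp only:)
qed simp

lemma block_counts_deviation_bounded:
  assumes "L > 0" and blocks: "\<And>J. card {e. e < L \<and> P (s + J * L + e)} = c"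
  obtains K where "\<And>m. s \<le> m \<Longrightarrow> \<bar>real (card {t. t < m \<and> P t}) - real c / real L * real m\<bar> \<le> K"
proof
  fix m assume "s \<le> m"
  define J r where "J = (m - s) div L" and "r = (m - s) mod L"
  have m: "m = s + J * L + r" and "r < L"
    using \<open>s \<le> m\<close> \<open>L > 0\<close> by (simp_all add: J_def r_def)
  have "c \<le> L"
    using blocks[of 0] card_mono[of "{..<L}" "{e. e < L \<and> P (s + 0 * L + e)}"] by auto
  have "card {e. e < r \<and> P (s + J * L + e)} \<le> r"
    using card_mono[of "{..<r}" "{e. e < r \<and> P (s + J * L + e)}"] by auto
  moreover have "card {t. t < m \<and> P t} = card {t. t < s \<and> P t} + J * c + card {e. e < r \<and> P (s + J * L + e)}"
    unfolding m using card_less_add[of "s + J * L" r P] card_less_block_counts[OF blocks, of J] by simp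
  ultimately have "real (card {t. t < s \<and> P t}) + real J * real c \<le> real (card {t. t < m \<and> P t})"
      "real (card {t. t < m \<and> P t}) \<le> real (card {t. t < s \<and> P t}) + real J * real c + real r"
    by simp_all
  moreover have "real c / real L * real m = real c / real L * real s + real J * real c + real c / real L * real r"
    unfolding m using \<open>L > 0\<close> by (simp add: field_simps)
  moreover have "real c / real L * real s \<le> real s" "real c / real L * real r \<le> real L"
    using \<open>c \<le> L\<close> \<open>r < L\<close> \<open>L > 0\<close> by (simp_all add: divide_le_eq field_simps mult_mono)
  moreover have "0 \<le> real c / real L * real s" "0 \<le> real c / real L * real r" by simp_all
  ultimately show "\<bar>real (card {t. t < m \<and> P t}) - real c / real L * real m\<bar>
      \<le> real (card {t. t < s \<and> P t}) + real s + 2 * real L"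
    unfolding abs_le_iff using \<open>r < L\<close> by (intro conjI) linarith+
qed

lemma tendsto_frequency_of_block_counts:
  assumes "L > 0" and "\<And>J. card {e. e < L \<and> P (s + J * L + e)} = c"
  shows "(\<lambda>m. real (card {t. t < m \<and> P t}) / real m) \<longlonglongrightarrow> real c / real L"
proof -
  obtain K where
    "\<And>m. s \<le> m \<Longrightarrow> \<bar>real (card {t. t < m \<and> P t}) - real c / real L * real m\<bar> \<le> K"
    using block_counts_deviation_bounded[OF assms] by blast
  moreover define f where "f m = real (card {t. t < m \<and> P t})" for m
  ultimately have K: "\<And>m. s \<le> m \<Longrightarrow> \<bar>f m - real c / real L * real m\<bar> \<le> K"
    by simp
  have "(\<lambda>m. f m / real m - real c / real L) \<longlonglongrightarrow> 0"
  proof (rule Lim_null_comparison)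
    show "\<forall>\<^sub>F m in sequentially. norm (f m / real m - real c / real L) \<le> K / real m"
    proof (rule eventually_sequentiallyI[of "Suc s"])
      fix m assume "Suc s \<le> m"
      then have "norm (f m / real m - real c / real L) = \<bar>f m - real c / real L * real m\<bar> / real m"
        by (simp add: field_simps)
      also have "\<dots> \<le> K / real m"
        using K[of m] \<open>Suc s \<le> m\<close> by (intro divide_right_mono) auto
      finally show "norm (f m / real m - real c / real L) \<le> K / real m" .
    qed
  qed (rule lim_const_over_n)
  then show ?thesis by (simp add: f_def LIM_zero_cancel)
qed

definition concat_blocks :: "(nat \<Rightarrow> nat) \<Rightarrow> nat \<Rightarrow> nat \<Rightarrow> (nat \<Rightarrow> nat \<Rightarrow> nat) \<Rightarrow> nat \<Rightarrow> nat" where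
  "concat_blocks a s L B t = (if t < s then a t else B ((t - s) div L) ((t - s) mod L))"

lemma concat_blocks_block:
  assumes "r < L"
  shows "concat_blocks a s L B (s + J * L + r) = B J r"
proof -
  have "(J * L + r) div L = J" "(J * L + r) mod L = r" using assms by auto
  then show ?thesis by (simp add: concat_blocks_def add.assoc)
qed

lemma occ_count_concat_blocks:
  assumes "L > 0" "length b \<le> L"
    and agree: "\<And>J r. r < length b - 1 \<Longrightarrow> B (Suc J) r = B J r"
    and counts: "\<And>J. card {e. e < L \<and> (\<forall>i<length b. B J ((e + i) mod L) = b ! i)} = c"
  shows "(\<lambda>m. real (occ_count b (concat_blocks a s L B) m) / real m) \<longlonglongrightarrow> real c / real L"
  unfolding occ_count_def
proof (rule tendsto_frequency_of_block_counts[OF assms(1)])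
  fix J
  have "concat_blocks a s L B (s + J * L + e + i) = B J ((e + i) mod L)"
    if "e < L" "i < length b" for e i
  proof (cases "e + i < L")
    case True
    then show ?thesis using concat_blocks_block[OF True, of a s B J] by (simp add: add.assoc)
  next
    case False
    then have "s + J * L + e + i = s + Suc J * L + (e + i - L)" "e + i - L < length b - 1"
      and "(e + i) mod L = e + i - L"
      using that assms(2) by (auto simp: le_mod_geq)
    moreover have "e + i - L < L" using that assms(2) by linarith
    ultimately show ?thesis
      using agree concat_blocks_block[of "e + i - L" L a s B "Suc J"] by (simp add: add.assoc)
  qed
  then show "card {e. e < L \<and> (\<forall>i<length b. concat_blocks a s L B (s + J * L + e + i) = b ! i)} = c"
    using counts[of J] by (smt (verit, best) Collect_cong)
qed

definition block_point :: "real \<Rightarrow> (nat \<Rightarrow> 'a::real_vector) \<Rightarrow> nat \<Rightarrow> (nat \<Rightarrow> nat) \<Rightarrow> 'a" where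
  "block_point lam p L w = (1 / (\<Sum>r<L. lam ^ r)) *\<^sub>R (\<Sum>r<L. lam ^ r *\<^sub>R p (w r))"

lemma coding_sum_block:
  assumes "0 < lam" "L > 0"
  shows "(\<Sum>i<L. ((1 - lam) * lam ^ (m + i)) *\<^sub>R p (w i)) = lam ^ m *\<^sub>R ((1 - lam ^ L) *\<^sub>R block_point lam p L w)"
proof -
  have "(\<Sum>r<L. lam ^ r) > 0" using assms by (intro sum_pos) auto
  then show ?thesis
    by (simp add: block_point_def one_diff_power_eq scaleR_sum_right power_add algebra_simps)
qed

lemma block_point_in_convex_hull:
  assumes "0 < lam" "L > 0" "\<forall>r<L. w r \<in> {0..n}"
  shows "block_point lam p L w \<in> convex hull (p ` {0..n})"
proof -
  have "(\<Sum>r<L. lam ^ r) > 0" using assms by (intro sum_pos) auto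
  then have "block_point lam p L w = (\<Sum>r<L. (lam ^ r / (\<Sum>r<L. lam ^ r)) *\<^sub>R p (w r))"
    by (simp add: block_point_def scaleR_sum_right)
  also have "\<dots> \<in> convex hull ((\<lambda>r. p (w r)) ` {..<L})"
    using \<open>(\<Sum>r<L. lam ^ r) > 0\<close> assms(1)
    by (intro convex_hull_indexedI[where c="\<lambda>r. p (w r)"]) (auto simp: sum_divide_distrib[symmetric])
  also have "\<dots> \<subseteq> convex hull (p ` {0..n})"
    using assms(3) by (intro hull_mono) auto
  finally show ?thesis .
qed

lemma coding_sum_concat_blocks:
  assumes lam: "0 < lam" and "L > 0"
    and Y: "\<And>J. Y J = lam ^ L *\<^sub>R Y (Suc J) + (1 - lam ^ L) *\<^sub>R block_point lam p L (B J)"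
    and x: "x = coding_sum lam p a s + lam ^ s *\<^sub>R Y 0"
  shows "x - coding_sum lam p (concat_blocks a s L B) (s + J * L) = lam ^ (s + J * L) *\<^sub>R Y J"
proof (induction J)
  case 0
  have "coding_sum lam p (concat_blocks a s L B) s = coding_sum lam p a s"
    by (rule coding_sum_cong) (simp add: concat_blocks_def)
  then show ?case using x by simp
next
  case (Suc J)
  have "s + Suc J * L = s + J * L + L" by simp
  then have "coding_sum lam p (concat_blocks a s L B) (s + Suc J * L)
      = coding_sum lam p (concat_blocks a s L B) (s + J * L)
        + (\<Sum>i<L. ((1 - lam) * lam ^ (s + J * L + i)) *\<^sub>R p (concat_blocks a s L B (s + J * L + i)))"
    by (simp only: coding_sum_add)
  also have "(\<Sum>i<L. ((1 - lam) * lam ^ (s + J * L + i)) *\<^sub>R p (concat_blocks a s L B (s + J * L + i)))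
      = (\<Sum>i<L. ((1 - lam) * lam ^ (s + J * L + i)) *\<^sub>R p (B J i))"
    by (intro sum.cong refl) (simp add: concat_blocks_block)
  also have "\<dots> = lam ^ (s + J * L) *\<^sub>R ((1 - lam ^ L) *\<^sub>R block_point lam p L (B J))"
    by (rule coding_sum_block[OF lam(1) \<open>L > 0\<close>])
  finally have "x - coding_sum lam p (concat_blocks a s L B) (s + Suc J * L)
      = lam ^ (s + J * L) *\<^sub>R (Y J - (1 - lam ^ L) *\<^sub>R block_point lam p L (B J))"
    using Suc by (simp add: scaleR_diff_right algebra_simps)
  also have "Y J - (1 - lam ^ L) *\<^sub>R block_point lam p L (B J) = lam ^ L *\<^sub>R Y (Suc J)"
    using Y[of J] by simp
  finally show ?case by (simp add: power_add mult_ac)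
qed

lemma coding_map_concat_blocks:
  fixes p :: "nat \<Rightarrow> 'a::banach"
  assumes lam: "0 < lam" "lam < 1" and "L > 0"
    and digits: "\<forall>t. a t \<in> {0..n}" "\<forall>J r. B J r \<in> {0..n}"
    and Y: "\<And>J. Y J = lam ^ L *\<^sub>R Y (Suc J) + (1 - lam ^ L) *\<^sub>R block_point lam p L (B J)"
    and "bounded (range Y)"
    and x: "x = coding_sum lam p a s + lam ^ s *\<^sub>R Y 0"
  shows "coding_map lam p (concat_blocks a s L B) = x"
proof -
  let ?a = "concat_blocks a s L B"
  obtain M where M: "\<And>J. norm (Y J) \<le> M"
    using \<open>bounded (range Y)\<close> by (auto simp: bounded_iff)
  have "(\<lambda>J. lam ^ (s + J * L) *\<^sub>R Y J) \<longlonglongrightarrow> 0"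
  proof (rule Lim_null_comparison[OF always_eventually])
    show "\<forall>J. norm (lam ^ (s + J * L) *\<^sub>R Y J) \<le> M * lam ^ J"
    proof
      fix J
      have "J \<le> s + J * L" using \<open>L > 0\<close> by (simp add: trans_le_add2)
      then have "lam ^ (s + J * L) \<le> lam ^ J"
        using lam by (intro power_decreasing) auto
      then have "norm (Y J) * lam ^ (s + J * L) \<le> M * lam ^ J"
        using lam M[of J] by (intro mult_mono) (auto intro: order_trans[OF norm_ge_zero])
      then show "norm (lam ^ (s + J * L) *\<^sub>R Y J) \<le> M * lam ^ J"
        using lam by (simp add: mult.commute)
    qed
    show "(\<lambda>J. M * lam ^ J) \<longlonglongrightarrow> 0"
      using lam by (intro tendsto_mult_right_zero LIMSEQ_power_zero) auto
  qed
  then have "(\<lambda>J. x - lam ^ (s + J * L) *\<^sub>R Y J) \<longlonglongrightarrow> x - 0"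
    by (intro tendsto_diff tendsto_const)
  moreover have "coding_sum lam p ?a (s + J * L) = x - lam ^ (s + J * L) *\<^sub>R Y J" for J
    using coding_sum_concat_blocks[OF lam(1) \<open>L > 0\<close> Y x, of J] by (simp add: algebra_simps)
  ultimately have "(\<lambda>J. coding_sum lam p ?a (s + J * L)) \<longlonglongrightarrow> x" by simp
  moreover have "\<forall>t. ?a t \<in> {0..n}" using digits by (simp add: concat_blocks_def)
  moreover have "strict_mono (\<lambda>J. s + J * L)" using \<open>L > 0\<close> by (intro strict_monoI) simp
  ultimately show ?thesis by (intro coding_map_eqI[OF lam]) auto
qed

lemma convex_hull_itinerary:
  fixes C :: "nat \<Rightarrow> 'a::real_vector"
  assumes "0 < \<mu>" "1 - \<mu> \<le> 1 / q" "y \<in> convex hull (C ` {..<q})"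
  obtains Y js where "Y 0 = y" "\<And>J. js J < q" "\<And>J. Y J \<in> convex hull (C ` {..<q})"
    "\<And>J. Y J = \<mu> *\<^sub>R Y (Suc J) + (1 - \<mu>) *\<^sub>R C (js J)"
proof -
  have "\<exists>j z'. j < q \<and> z' \<in> convex hull (C ` {..<q}) \<and> z = \<mu> *\<^sub>R z' + (1 - \<mu>) *\<^sub>R C j"
    if z: "z \<in> convex hull (C ` {..<q})" for z
  proof -
    obtain \<beta> where \<beta>: "\<forall>j\<in>{..<q}. 0 \<le> \<beta> j" "sum \<beta> {..<q} = 1" "z = (\<Sum>j<q. \<beta> j *\<^sub>R C j)"
      using convex_hull_indexedE[OF finite_lessThan z] .
    then obtain j \<beta>' where "j \<in> {..<q}" "\<forall>i\<in>{..<q}. 0 \<le> \<beta>' i" "sum \<beta>' {..<q} = 1"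
      "z = \<mu> *\<^sub>R (\<Sum>i<q. \<beta>' i *\<^sub>R C i) + (1 - \<mu>) *\<^sub>R C j"
      using convex_combination_peel_vertex[OF finite_lessThan \<beta>(1,2) assms(1), of C] assms(2) by auto
    then show ?thesis using convex_hull_indexedI[OF finite_lessThan] by blast
  qed
  then have "\<forall>z\<in>convex hull (C ` {..<q}). \<exists>jz. fst jz < q \<and>
      snd jz \<in> convex hull (C ` {..<q}) \<and> z = \<mu> *\<^sub>R snd jz + (1 - \<mu>) *\<^sub>R C (fst jz)"
    by force
  then obtain nxt where nxt: "\<And>z. z \<in> convex hull (C ` {..<q}) \<Longrightarrow> fst (nxt z) < q \<and>
      snd (nxt z) \<in> convex hull (C ` {..<q}) \<and> z = \<mu> *\<^sub>R snd (nxt z) + (1 - \<mu>) *\<^sub>R C (fst (nxt z))"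
    using bchoice by metis
  define Y where "Y = rec_nat y (\<lambda>_ z. snd (nxt z))"
  have Y: "Y J \<in> convex hull (C ` {..<q})" for J
    by (induction J) (use assms(3) nxt in \<open>auto simp: Y_def\<close>)
  show ?thesis
    by (rule that[of Y "\<lambda>J. fst (nxt (Y J))"]) (use Y nxt in \<open>auto simp: Y_def\<close>)
qed

section \<open>Greedy steering towards a target point\<close>

definition greedy_digit :: "nat \<Rightarrow> (nat \<Rightarrow> real) \<Rightarrow> nat" where
  "greedy_digit n f = (SOME i. i \<le> n \<and> (\<forall>j\<le>n. f j \<le> f i))"

lemma greedy_digit: "greedy_digit n f \<le> n" "j \<le> n \<Longrightarrow> f j \<le> f (greedy_digit n f)"
proof -
  have "Max (f ` {..n}) \<in> f ` {..n}" by (intro Max_in) auto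
  then obtain i where "i \<le> n" "f i = Max (f ` {..n})" by (metis atMost_iff imageE)
  then have "\<exists>i. i \<le> n \<and> (\<forall>j\<le>n. f j \<le> f i)" by auto
  from someI_ex[OF this] show "greedy_digit n f \<le> n" "j \<le> n \<Longrightarrow> f j \<le> f (greedy_digit n f)"
    unfolding greedy_digit_def by auto
qed

text \<open>The weights still to be spent after t greedy steps: each step spends (1 - lam) lam^t on a
  digit of currently largest weight.\<close>
primrec greedy_residual :: "real \<Rightarrow> nat \<Rightarrow> (nat \<Rightarrow> real) \<Rightarrow> nat \<Rightarrow> nat \<Rightarrow> real" where
  "greedy_residual lam n r 0 = r"
| "greedy_residual lam n r (Suc t) = (\<lambda>i. greedy_residual lam n r t i -
      (if i = greedy_digit n (greedy_residual lam n r t) then (1 - lam) * lam ^ t else 0))"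

abbreviation greedy_digits :: "real \<Rightarrow> nat \<Rightarrow> (nat \<Rightarrow> real) \<Rightarrow> nat \<Rightarrow> nat" where
  "greedy_digits lam n r t \<equiv> greedy_digit n (greedy_residual lam n r t)"

lemma sum_greedy_residual:
  "(\<Sum>i\<in>{0..n}. greedy_residual lam n r t i) = (\<Sum>i\<in>{0..n}. r i) - (1 - lam ^ t)"
  by (induction t) (auto simp: sum_subtractf sum.delta greedy_digit algebra_simps)

lemma coding_sum_greedy_digits:
  "coding_sum lam p (greedy_digits lam n r) t = (\<Sum>i\<in>{0..n}. (r i - greedy_residual lam n r t i) *\<^sub>R p i)"
proof (induction t)
  case (Suc t)
  let ?g = "greedy_digits lam n r t"
  have "coding_sum lam p (greedy_digits lam n r) (Suc t)
      = (\<Sum>i\<in>{0..n}. (r i - greedy_residual lam n r t i) *\<^sub>R p i) + ((1 - lam) * lam ^ t) *\<^sub>R p ?g"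
    by (simp only: coding_sum_Suc Suc.IH)
  also have "((1 - lam) * lam ^ t) *\<^sub>R p ?g = (\<Sum>i\<in>{0..n}. if i = ?g then ((1 - lam) * lam ^ t) *\<^sub>R p i else 0)"
    using greedy_digit(1)[of n] by (simp add: sum.delta)
  also have "(\<Sum>i\<in>{0..n}. (r i - greedy_residual lam n r t i) *\<^sub>R p i) + \<dots>
      = (\<Sum>i\<in>{0..n}. (r i - greedy_residual lam n r (Suc t) i) *\<^sub>R p i)"
    by (simp only: sum.distrib[symmetric]) (intro sum.cong refl, simp add: algebra_simps)
  finally show ?case .
qed (simp add: coding_sum_def)

lemma greedy_residual_nonneg:
  assumes "0 \<le> lam" "\<forall>i\<in>{0..n}. 0 \<le> r i"
    and room: "\<And>t. t < s \<Longrightarrow> real (n + 1) * ((1 - lam) * lam ^ t) \<le> (\<Sum>i\<in>{0..n}. r i) - (1 - lam ^ t)"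
    and "t \<le> s" "i \<in> {0..n}"
  shows "0 \<le> greedy_residual lam n r t i"
  using assms(4,5)
proof (induction t arbitrary: i)
  case (Suc t)
  let ?\<rho> = "greedy_residual lam n r t"
  have "(\<Sum>i\<in>{0..n}. ?\<rho> i) \<le> (\<Sum>i\<in>{0..n}. ?\<rho> (greedy_digit n ?\<rho>))"
    by (intro sum_mono) (simp add: greedy_digit)
  moreover have "(\<Sum>i\<in>{0..n}. ?\<rho> (greedy_digit n ?\<rho>)) = real (n + 1) * ?\<rho> (greedy_digit n ?\<rho>)"
    by simp
  moreover have "real (n + 1) * ((1 - lam) * lam ^ t) \<le> (\<Sum>i\<in>{0..n}. ?\<rho> i)"
    using room[of t] Suc.prems by (simp add: sum_greedy_residual)
  ultimately have "real (n + 1) * ((1 - lam) * lam ^ t) \<le> real (n + 1) * ?\<rho> (greedy_digit n ?\<rho>)"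
    by linarith
  then have "(1 - lam) * lam ^ t \<le> ?\<rho> (greedy_digit n ?\<rho>)"
    by (rule mult_left_le_imp_le) simp
  then show ?case using Suc by auto
qed (use assms(2) in simp)

lemma greedy_stopping_time:
  assumes lam: "0 < lam" "lam < 1"
    and r: "\<forall>i\<in>{0..n}. 0 \<le> r i" "sum r {0..n} = 1 - lam ^ m"
  obtains s where "s \<le> m" "1 - lam ^ (m - s) < real (n + 1) * (1 - lam)"
    "\<forall>i\<in>{0..n}. 0 \<le> greedy_residual lam n r s i"
proof -
  let ?q = "real (n + 1)"
  define s where "s = (LEAST t. 1 - lam ^ (m - t) < ?q * (1 - lam))"
  have "1 - lam ^ (m - m) < ?q * (1 - lam)" using lam by simp
  then have s: "1 - lam ^ (m - s) < ?q * (1 - lam)" "s \<le> m"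
    unfolding s_def by (rule LeastI, rule Least_le)
  have "?q * ((1 - lam) * lam ^ t) \<le> sum r {0..n} - (1 - lam ^ t)" if "t < s" for t
  proof -
    have "?q * (1 - lam) \<le> 1 - lam ^ (m - t)" using not_less_Least[OF that[unfolded s_def]] by simp
    then have "?q * (1 - lam) * lam ^ t \<le> (1 - lam ^ (m - t)) * lam ^ t"
      using lam by (intro mult_right_mono) auto
    also have "\<dots> = lam ^ t - lam ^ m" using that s by (simp add: algebra_simps power_add[symmetric])
    finally show ?thesis using r(2) by (simp add: mult.assoc)
  qed
  then have "\<forall>i\<in>{0..n}. 0 \<le> greedy_residual lam n r s i"
    using greedy_residual_nonneg[of lam n r s s] r(1) lam by auto
  with s show ?thesis using that by blast
qed

text \<open>Spending the weights u - lam^m z greedily until the remaining mass drops below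
  (n + 1)(1 - lam) times the current scale leaves a rescaled remainder close to z.\<close>
lemma greedy_prefix_approximates:
  fixes p :: "nat \<Rightarrow> 'a::real_normed_vector"
  assumes lam: "0 < lam" "lam < 1"
    and u: "\<forall>i\<in>{0..n}. 0 < u i" "sum u {0..n} = 1"
    and z: "z \<in> convex hull (p ` {0..n})" and D: "\<forall>i\<in>{0..n}. norm (p i - z) \<le> D"
  obtains s a where "\<forall>t. a t \<in> {0..n}"
    "norm ((1 / lam ^ s) *\<^sub>R ((\<Sum>i\<in>{0..n}. u i *\<^sub>R p i) - coding_sum lam p a s) - z)
      \<le> real (n + 1) * (1 - lam) * D"
proof -
  obtain \<zeta> where \<zeta>: "\<forall>i\<in>{0..n}. 0 \<le> \<zeta> i" "sum \<zeta> {0..n} = 1" "z = (\<Sum>i\<in>{0..n}. \<zeta> i *\<^sub>R p i)"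
    using convex_hull_indexedE[OF finite_atLeastAtMost z] .
  have "0 < Min (u ` {0..n})" using u by simp
  then obtain m where m: "lam ^ m < Min (u ` {0..n})"
    using real_arch_pow_inv[OF _ lam(2)] by blast
  define r where "r i = u i - lam ^ m * \<zeta> i" for i
  have "0 \<le> r i" if "i \<in> {0..n}" for i
  proof -
    have "\<zeta> i \<le> sum \<zeta> {0..n}" using \<zeta>(1) that by (intro member_le_sum) auto
    then have "lam ^ m * \<zeta> i \<le> lam ^ m" using lam \<zeta>(2) by (simp add: mult_left_le)
    moreover have "lam ^ m < u i" using m that by auto
    ultimately show ?thesis by (simp add: r_def)
  qed
  moreover have sum_r: "sum r {0..n} = 1 - lam ^ m"
    using u \<zeta> by (simp add: r_def sum_subtractf sum_distrib_left[symmetric])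
  ultimately obtain s where s: "s \<le> m" "1 - lam ^ (m - s) < real (n + 1) * (1 - lam)"
    and nonneg: "\<forall>i\<in>{0..n}. 0 \<le> greedy_residual lam n r s i"
    using greedy_stopping_time[OF lam] by blast
  define g where "g = greedy_digits lam n r"
  define \<rho> where "\<rho> = greedy_residual lam n r s"
  have sum_\<rho>: "sum \<rho> {0..n} = lam ^ s - lam ^ m"
    using sum_r by (simp add: \<rho>_def sum_greedy_residual)
  have "(\<Sum>i\<in>{0..n}. u i *\<^sub>R p i) - coding_sum lam p g s = (\<Sum>i\<in>{0..n}. (lam ^ m * \<zeta> i) *\<^sub>R p i + \<rho> i *\<^sub>R p i)"
    by (simp add: g_def \<rho>_def coding_sum_greedy_digits sum_subtractf[symmetric] r_def algebra_simps)
  also have "\<dots> = lam ^ m *\<^sub>R z + (\<Sum>i\<in>{0..n}. \<rho> i *\<^sub>R p i)"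
    by (simp add: \<zeta>(3) sum.distrib scaleR_sum_right)
  also have "(\<Sum>i\<in>{0..n}. \<rho> i *\<^sub>R p i) = (\<Sum>i\<in>{0..n}. \<rho> i *\<^sub>R (p i - z)) + (lam ^ s - lam ^ m) *\<^sub>R z"
    using sum_\<rho> by (simp add: scaleR_diff_right sum_subtractf scaleR_sum_left[symmetric])
  finally have "(\<Sum>i\<in>{0..n}. u i *\<^sub>R p i) - coding_sum lam p g s
      = lam ^ s *\<^sub>R z + (\<Sum>i\<in>{0..n}. \<rho> i *\<^sub>R (p i - z))"
    by (simp add: scaleR_diff_left)
  then have "(1 / lam ^ s) *\<^sub>R ((\<Sum>i\<in>{0..n}. u i *\<^sub>R p i) - coding_sum lam p g s) - z
      = (1 / lam ^ s) *\<^sub>R (\<Sum>i\<in>{0..n}. \<rho> i *\<^sub>R (p i - z))"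
    using lam by (simp add: scaleR_add_right)
  also have "norm \<dots> \<le> (1 / lam ^ s) * ((lam ^ s - lam ^ m) * D)"
  proof -
    have "norm (\<Sum>i\<in>{0..n}. \<rho> i *\<^sub>R (p i - z)) \<le> (\<Sum>i\<in>{0..n}. \<rho> i * D)"
      using nonneg D by (intro order_trans[OF norm_sum] sum_mono) (simp add: \<rho>_def mult_left_mono)
    then show ?thesis using lam sum_\<rho> by (simp add: divide_right_mono sum_distrib_right[symmetric])
  qed
  also have "\<dots> = (1 - lam ^ (m - s)) * D"
  proof -
    have "lam ^ m = lam ^ s * lam ^ (m - s)" using s(1) by (simp add: power_add[symmetric])
    then show ?thesis using lam by (simp add: field_simps)
  qed
  also have "\<dots> \<le> real (n + 1) * (1 - lam) * D"
    using s(2) order_trans[OF norm_ge_zero D[rule_format, of 0]] by (intro mult_right_mono) auto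
  finally show ?thesis
    using that[of g s] greedy_digit(1) by (auto simp: g_def)
qed

section \<open>Block points of rotated counter words\<close>

definition block_drift :: "real \<Rightarrow> nat \<Rightarrow> (nat \<Rightarrow> 'a::real_vector) \<Rightarrow> 'a" where
  "block_drift lam L v = (1 / (\<Sum>r<L. lam ^ r)) *\<^sub>R (\<Sum>r<L. (\<Sum>i<r. lam ^ i) *\<^sub>R v r)"

lemma block_point_eq_drift:
  assumes "0 < lam" "L > 0" "\<And>r. r < L \<Longrightarrow> p (w r) = c + v r" "(\<Sum>r<L. v r) = 0"
  shows "block_point lam p L w = c - (1 - lam) *\<^sub>R block_drift lam L v"
proof -
  have S: "(\<Sum>r<L. lam ^ r) > 0" using assms by (intro sum_pos) auto
  have "(\<Sum>r<L. lam ^ r *\<^sub>R v r) = (\<Sum>r<L. v r - ((1 - lam) * (\<Sum>i<r. lam ^ i)) *\<^sub>R v r)"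
    by (intro sum.cong refl) (simp add: one_diff_power_eq[symmetric] scaleR_diff_left)
  also have "\<dots> = (\<Sum>r<L. v r) - (1 - lam) *\<^sub>R (\<Sum>r<L. (\<Sum>i<r. lam ^ i) *\<^sub>R v r)"
    by (simp add: sum_subtractf scaleR_sum_right)
  finally have "(\<Sum>r<L. lam ^ r *\<^sub>R v r) = - ((1 - lam) *\<^sub>R (\<Sum>r<L. (\<Sum>i<r. lam ^ i) *\<^sub>R v r))"
    using assms(4) by simp
  moreover have "(\<Sum>r<L. lam ^ r *\<^sub>R p (w r)) = (\<Sum>r<L. lam ^ r) *\<^sub>R c + (\<Sum>r<L. lam ^ r *\<^sub>R v r)"
    using assms(3) by (simp add: scaleR_add_right sum.distrib scaleR_sum_left)
  ultimately show ?thesis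
    using S by (simp add: block_point_def block_drift_def scaleR_add_right scaleR_diff_right)
qed

lemma isCont_block_drift:
  fixes v :: "nat \<Rightarrow> 'a::real_normed_vector"
  assumes "L > 0"
  shows "isCont (\<lambda>l. block_drift l L v) 1"
proof -
  have "(\<Sum>r<L. (1::real) ^ r) \<noteq> 0" using assms by simp
  then show ?thesis unfolding block_drift_def by (intro continuous_intros) auto
qed

lemma block_drift_1: "block_drift 1 L v = (1 / real L) *\<^sub>R (\<Sum>r<L. real r *\<^sub>R v r)"
  by (simp add: block_drift_def)

lemma block_point_rotated_word:
  fixes p :: "nat \<Rightarrow> 'a::real_vector"
  assumes "0 < lam" "N > 0" "j < Suc n" "\<And>i. i \<le> n \<Longrightarrow> p i = c + g i" "(\<Sum>i<Suc n. g i) = 0"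
  shows "block_point lam p (N * Suc n ^ N) (rotated_word (Suc n) N j)
    = c - (1 - lam) *\<^sub>R block_drift lam (N * Suc n ^ N) (g \<circ> rotated_word (Suc n) N j)"
proof (rule block_point_eq_drift[OF assms(1)])
  show "(\<Sum>r<N * Suc n ^ N. (g \<circ> rotated_word (Suc n) N j) r) = 0"
    using sum_rotated_word[of "Suc n" N j g] assms(2,3,5) by simp
  show "p (rotated_word (Suc n) N j r) = c + (g \<circ> rotated_word (Suc n) N j) r" for r
    using assms(4) rotated_word_less[of "Suc n" N j r] by simp
qed (use assms(2) in simp)

lemma block_drift_rotated_word_1:
  fixes g :: "nat \<Rightarrow> 'a::real_vector"
  assumes "q > 0" "N > 0" "j < q" "(\<Sum>i<q. g i) = 0"
  shows "block_drift 1 (N * q ^ N) (g \<circ> rotated_word q N j)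
    = block_drift 1 (N * q ^ N) (g \<circ> counter_word q N) + real (q ^ (N - 1)) *\<^sub>R (\<Sum>b<j. g b)"
  using sum_weighted_rotated_word[OF assms] assms(1,2)
  by (simp add: block_drift_1 scaleR_add_right)

lemma mem_convex_hull_affine_image:
  assumes "finite J" "y \<in> convex hull (G ` J)"
  shows "c - e *\<^sub>R y \<in> convex hull ((\<lambda>j. c - e *\<^sub>R G j) ` J)"
proof -
  obtain \<beta> where \<beta>: "\<forall>j\<in>J. 0 \<le> \<beta> j" "sum \<beta> J = 1" "y = (\<Sum>j\<in>J. \<beta> j *\<^sub>R G j)"
    using convex_hull_indexedE[OF assms] .
  have "(\<Sum>j\<in>J. \<beta> j *\<^sub>R (c - e *\<^sub>R G j)) = (\<Sum>j\<in>J. \<beta> j) *\<^sub>R c - e *\<^sub>R (\<Sum>j\<in>J. \<beta> j *\<^sub>R G j)"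
    by (simp add: scaleR_diff_right sum_subtractf scaleR_sum_left scaleR_sum_right mult.commute)
  then have "c - e *\<^sub>R y = (\<Sum>j\<in>J. \<beta> j *\<^sub>R (c - e *\<^sub>R G j))"
    using \<beta>(2,3) by simp
  then show ?thesis using convex_hull_indexedI[OF assms(1) \<beta>(1,2), of "\<lambda>j. c - e *\<^sub>R G j"] by simp
qed

lemma cball_subset_convex_hull_scaled:
  fixes V G :: "nat \<Rightarrow> 'a::euclidean_space"
  assumes "0 < e" "0 \<le> \<rho>" and ball: "cball z \<rho> \<subseteq> convex hull (V ` {..<q})"
    and \<gamma>: "\<forall>j<q. 0 \<le> \<gamma> j" "(\<Sum>j<q. \<gamma> j) = 1" "z = (\<Sum>j<q. \<gamma> j *\<^sub>R V j)"
    and close: "\<forall>j<q. norm (G j - (H + s *\<^sub>R V j)) \<le> \<eta>"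
    and "R + 2 * \<eta> < s * \<rho>"
  shows "cball (\<Sum>j<q. \<gamma> j *\<^sub>R (c - e *\<^sub>R G j)) (e * R) \<subseteq> convex hull ((\<lambda>j. c - e *\<^sub>R G j) ` {..<q})"
proof
  fix y assume "y \<in> cball (\<Sum>j<q. \<gamma> j *\<^sub>R (c - e *\<^sub>R G j)) (e * R)"
  then have y: "norm (c - e *\<^sub>R (\<Sum>j<q. \<gamma> j *\<^sub>R G j) - y) \<le> e * R"
    using \<gamma>(2) by (simp add: dist_norm scaleR_diff_right sum_subtractf scaleR_sum_left[symmetric]
        scaleR_sum_right mult.commute)
  define y' where "y' = (1 / e) *\<^sub>R (c - y)"
  have "norm (y' - (\<Sum>j<q. \<gamma> j *\<^sub>R G j)) = (1 / e) * norm (c - e *\<^sub>R (\<Sum>j<q. \<gamma> j *\<^sub>R G j) - y)"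
  proof -
    have "y' - (\<Sum>j<q. \<gamma> j *\<^sub>R G j) = (1 / e) *\<^sub>R (c - e *\<^sub>R (\<Sum>j<q. \<gamma> j *\<^sub>R G j) - y)"
      using \<open>0 < e\<close> by (simp add: y'_def algebra_simps)
    then show ?thesis using \<open>0 < e\<close> by simp
  qed
  also have "\<dots> \<le> R" using y \<open>0 < e\<close> by (simp add: field_simps)
  finally have "norm (y' - (\<Sum>j<q. \<gamma> j *\<^sub>R G j)) \<le> R" .
  moreover have "norm ((\<Sum>j<q. \<gamma> j *\<^sub>R G j) - (H + s *\<^sub>R z)) \<le> \<eta>"
  proof -
    have "(\<Sum>j<q. \<gamma> j *\<^sub>R G j) - (H + s *\<^sub>R z) = (\<Sum>j<q. \<gamma> j *\<^sub>R (G j - (H + s *\<^sub>R V j)))"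
      using \<gamma>(2,3) by (simp add: scaleR_diff_right scaleR_add_right sum_subtractf sum.distrib
          scaleR_sum_left[symmetric] scaleR_sum_right mult.commute)
    also have "norm \<dots> \<le> (\<Sum>j<q. \<gamma> j * \<eta>)"
      using \<gamma>(1) close by (auto intro!: order_trans[OF norm_sum] sum_mono mult_left_mono)
    finally show ?thesis using \<gamma>(2) by (simp add: sum_distrib_right[symmetric])
  qed
  ultimately have "norm (y' - (H + s *\<^sub>R z)) \<le> R + \<eta>"
    by (rule norm_diff_triangle_le)
  then have "norm (y' - (H + s *\<^sub>R z)) < s * \<rho> - \<eta>"
    using \<open>R + 2 * \<eta> < s * \<rho>\<close> by simp
  moreover have "\<forall>j\<in>{..<q}. norm (G j - (H + s *\<^sub>R V j)) \<le> \<eta>" using close by simp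
  ultimately have "y' \<in> convex hull (G ` {..<q})"
    using mem_convex_hull_perturbed[OF finite_lessThan \<open>0 \<le> \<rho>\<close> ball] by simp
  then have "c - e *\<^sub>R y' \<in> convex hull ((\<lambda>j. c - e *\<^sub>R G j) ` {..<q})"
    by (rule mem_convex_hull_affine_image[OF finite_lessThan])
  moreover have "c - e *\<^sub>R y' = y" using \<open>0 < e\<close> by (simp add: y'_def)
  ultimately show "y \<in> convex hull ((\<lambda>j. c - e *\<^sub>R G j) ` {..<q})" by simp
qed

lemma aff_dim_eq_DIM_imp_pos:
  fixes p :: "nat \<Rightarrow> 'a::euclidean_space"
  assumes "aff_dim (p ` {0..n}) = int DIM('a)"
  shows "0 < n"
proof (rule ccontr)
  assume "\<not> 0 < n"
  then have "aff_dim (p ` {0..n}) = 0" by simp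
  then show False using assms by simp
qed

lemma centred_partial_sums_ball:
  fixes p :: "nat \<Rightarrow> 'a::euclidean_space"
  assumes aff: "aff_dim (p ` {0..n}) = int DIM('a)"
  defines "c \<equiv> (1 / real (Suc n)) *\<^sub>R (\<Sum>i\<le>n. p i)"
  obtains \<rho> \<gamma> where "0 < \<rho>" "\<forall>j<Suc n. 0 \<le> \<gamma> j" "(\<Sum>j<Suc n. \<gamma> j) = 1"
    "cball (\<Sum>j<Suc n. \<gamma> j *\<^sub>R (\<Sum>i<j. p i - c)) \<rho> \<subseteq> convex hull ((\<lambda>j. \<Sum>i<j. p i - c) ` {..<Suc n})"
proof -
  define g where "g i = p i - c" for i
  have "(\<Sum>i\<le>n. g i) = (\<Sum>i\<le>n. p i) - real (Suc n) *\<^sub>R c"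
    by (simp add: g_def sum_subtractf sum_constant_scaleR)
  then have "(\<Sum>i\<le>n. g i) = 0" by (simp add: c_def)
  moreover have "g ` {..n} = (\<lambda>x. x - c) ` p ` {0..n}" by (auto simp: g_def atLeast0AtMost)
  ultimately have "interior (convex hull ((\<lambda>j. \<Sum>i<j. g i) ` {..<Suc n})) \<noteq> {}"
    using interior_convex_hull_partial_sums[of g n] aff
    by (simp add: aff_dim_translation_eq_subtract lessThan_Suc_atMost)
  then obtain y0 \<rho> where \<rho>: "0 < \<rho>" "cball y0 \<rho> \<subseteq> convex hull ((\<lambda>j. \<Sum>i<j. g i) ` {..<Suc n})"
    by (auto simp: mem_interior_cball)
  then have "y0 \<in> convex hull ((\<lambda>j. \<Sum>i<j. g i) ` {..<Suc n})" by auto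
  then obtain \<gamma> where "\<forall>j\<in>{..<Suc n}. 0 \<le> \<gamma> j" "sum \<gamma> {..<Suc n} = 1" "y0 = (\<Sum>j<Suc n. \<gamma> j *\<^sub>R (\<Sum>i<j. g i))"
    using convex_hull_indexedE[OF finite_lessThan] by blast
  then show ?thesis using that[of \<rho> \<gamma>] \<rho> by (simp add: g_def)
qed

lemma exists_power_mult_gt:
  fixes q :: nat
  assumes "2 \<le> q" "0 < \<rho>"
  obtains N where "0 < N" "k \<le> N" "A < real (q ^ (N - 1)) * \<rho>"
proof
  define N where "N = k + nat \<lceil>A / \<rho>\<rceil> + 1"
  show "0 < N" "k \<le> N" by (simp_all add: N_def)
  have "A / \<rho> \<le> real (N - 1)" unfolding N_def by linarith
  also have "\<dots> < 2 ^ (N - 1)" by (metis of_nat_less_two_power)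
  also have "\<dots> \<le> real (q ^ (N - 1))" using assms(1) by (simp add: power_mono)
  finally show "A < real (q ^ (N - 1)) * \<rho>" using assms(2) by (simp add: divide_less_eq)
qed

text \<open>As lam tends to 1, the block points are c - (1 - lam) (H + q^(N-1) V j) up to o(1 - lam), with
  V j the partial sums of the centred digits; for N large their hull therefore contains a ball
  of radius of order (1 - lam) q^(N-1), which beats the error (n + 1)(1 - lam) D of the greedy prefix.\<close>
lemma cball_subset_convex_hull_rotated_block_points:
  fixes p :: "nat \<Rightarrow> 'a::euclidean_space"
  assumes aff: "aff_dim (p ` {0..n}) = int DIM('a)"
  obtains N \<delta> where "k \<le> N" "0 < \<delta>"
    "\<And>lam. 1 - \<delta> < lam \<Longrightarrow> lam < 1 \<Longrightarrow> \<exists>z. cball z (real (Suc n) * (1 - lam) * D)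
       \<subseteq> convex hull ((\<lambda>j. block_point lam p (N * Suc n ^ N) (rotated_word (Suc n) N j)) ` {..<Suc n})"
proof -
  define q c where "q = Suc n" and "c = (1 / real (Suc n)) *\<^sub>R (\<Sum>i\<le>n. p i)"
  define g where "g i = p i - c" for i
  have "2 \<le> q" using aff_dim_eq_DIM_imp_pos[OF aff] by (simp add: q_def)
  have g0: "(\<Sum>i<q. g i) = 0"
    by (simp add: g_def c_def q_def sum_subtractf sum_constant_scaleR lessThan_Suc_atMost)
  obtain \<rho> \<gamma> where \<rho>: "0 < \<rho>" and \<gamma>: "\<forall>j<q. 0 \<le> \<gamma> j" "(\<Sum>j<q. \<gamma> j) = 1"
    and ball: "cball (\<Sum>j<q. \<gamma> j *\<^sub>R (\<Sum>i<j. g i)) \<rho> \<subseteq> convex hull ((\<lambda>j. \<Sum>i<j. g i) ` {..<q})"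
    using centred_partial_sums_ball[OF aff] unfolding g_def c_def q_def by blast
  obtain N where "N > 0" "k \<le> N" and N_large: "real q * D + 1 < real (q ^ (N - 1)) * \<rho>"
    using exists_power_mult_gt[OF \<open>2 \<le> q\<close> \<rho>] by blast
  define L where "L = N * q ^ N"
  have "L > 0" using \<open>N > 0\<close> by (simp add: L_def q_def)
  define G where "G j l = block_drift l L (g \<circ> rotated_word q N j)" for j l
  define H where "H = block_drift 1 L (g \<circ> counter_word q N)"
  have G1: "G j 1 = H + real (q ^ (N - 1)) *\<^sub>R (\<Sum>i<j. g i)" if "j < q" for j
    unfolding G_def H_def L_def using block_drift_rotated_word_1[OF _ \<open>N > 0\<close> that g0] \<open>2 \<le> q\<close> by simp
  have "\<forall>\<^sub>F l in at 1. \<forall>j\<in>{..<q}. dist (G j l) (G j 1) < 1 / 2"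
    using isCont_block_drift[OF \<open>L > 0\<close>]
    by (intro eventually_ball_finite ballI tendstoD) (auto simp: G_def isCont_def)
  then obtain \<delta> where \<delta>: "0 < \<delta>" "\<And>l. l \<noteq> 1 \<Longrightarrow> dist l 1 < \<delta> \<Longrightarrow> \<forall>j<q. dist (G j l) (G j 1) < 1 / 2"
    by (auto simp: eventually_at)
  show ?thesis
  proof (rule that[of N "min \<delta> 1"])
    show "k \<le> N" "0 < min \<delta> 1" using \<open>k \<le> N\<close> \<delta>(1) by simp_all
    fix lam assume lam: "1 - min \<delta> 1 < lam" "lam < 1"
    have "\<forall>j<q. norm (G j lam - (H + real (q ^ (N - 1)) *\<^sub>R (\<Sum>i<j. g i))) \<le> 1 / 2"
      using \<delta>(2)[of lam] lam G1 by (auto simp: dist_norm less_imp_le)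
    then have "cball (\<Sum>j<q. \<gamma> j *\<^sub>R (c - (1 - lam) *\<^sub>R G j lam)) ((1 - lam) * (real q * D))
        \<subseteq> convex hull ((\<lambda>j. c - (1 - lam) *\<^sub>R G j lam) ` {..<q})"
      using lam \<gamma> N_large \<rho> ball
      by (intro cball_subset_convex_hull_scaled[where V="\<lambda>j. \<Sum>i<j. g i" and H=H
            and z="\<Sum>j<q. \<gamma> j *\<^sub>R (\<Sum>i<j. g i)" and s="real (q ^ (N - 1))" and \<eta>="1 / 2" and \<rho>=\<rho>]) auto
    moreover have "block_point lam p L (rotated_word q N j) = c - (1 - lam) *\<^sub>R G j lam" if "j < q" for j
      unfolding G_def L_def q_def using lam that g0 \<open>N > 0\<close>
      by (intro block_point_rotated_word) (auto simp: g_def q_def)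
    then have "(\<lambda>j. c - (1 - lam) *\<^sub>R G j lam) ` {..<q} = (\<lambda>j. block_point lam p L (rotated_word q N j)) ` {..<q}"
      by (intro image_cong) auto
    ultimately have "cball (\<Sum>j<q. \<gamma> j *\<^sub>R (c - (1 - lam) *\<^sub>R G j lam)) (real q * (1 - lam) * D)
        \<subseteq> convex hull ((\<lambda>j. block_point lam p L (rotated_word q N j)) ` {..<q})"
      by (simp add: mult_ac)
    then show "\<exists>z. cball z (real (Suc n) * (1 - lam) * D)
       \<subseteq> convex hull ((\<lambda>j. block_point lam p (N * Suc n ^ N) (rotated_word (Suc n) N j)) ` {..<Suc n})"
      unfolding L_def q_def by blast
  qed
qed

section \<open>Simply normal codings of interior points\<close>

lemma simply_normal_concat_rotated_words:
  assumes "1 \<le> k" "k \<le> N" "\<And>J. js J < Suc n"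
  shows "simply_normal n k (concat_blocks a s (N * Suc n ^ N) (\<lambda>J. rotated_word (Suc n) N (js J)))"
  unfolding simply_normal_def
proof (intro allI impI)
  fix b :: "nat list" assume b: "length b = k \<and> set b \<subseteq> {0..n}"
  define q L where "q = Suc n" and "L = N * q ^ N"
  have "0 < N" using assms(1,2) by simp
  have "N \<le> L" unfolding L_def q_def by (simp add: Suc_le_eq)
  then have "k \<le> L" using assms(2) by linarith
  have "(\<lambda>m. real (occ_count b (concat_blocks a s L (\<lambda>J. rotated_word q N (js J))) m) / real m)
      \<longlonglongrightarrow> real (N * q ^ (N - k)) / real L"
  proof (rule occ_count_concat_blocks)
    show "0 < L" "length b \<le> L" using \<open>0 < N\<close> \<open>k \<le> L\<close> b by (simp_all add: L_def q_def)
    show "rotated_word q N (js (Suc J)) r = rotated_word q N (js J) r" if "r < length b - 1" for J r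
      using that b assms rotated_word_initial_zero[of q N] by (simp add: q_def)
    have "\<forall>i<k. b ! i < q" using b by (auto simp: q_def less_Suc_eq_le dest!: nth_mem)
    then show "card {e. e < L \<and> (\<forall>i<length b. rotated_word q N (js J) ((e + i) mod L) = b ! i)} = N * q ^ (N - k)" for J
      using rotated_word_window_count[of q N k "\<lambda>i. b ! i" "js J"] assms b \<open>0 < N\<close>
      by (simp add: L_def q_def Int_def)
  qed
  moreover have "real (N * q ^ (N - k)) / real L = 1 / real (n + 1) ^ k"
  proof -
    have "q ^ N = q ^ (N - k) * q ^ k" using assms(2) by (simp add: power_add[symmetric])
    then show ?thesis using \<open>0 < N\<close> by (simp add: L_def q_def field_simps)
  qed
  ultimately show "(\<lambda>m. real (occ_count b (concat_blocks a s (N * Suc n ^ N) (\<lambda>J. rotated_word (Suc n) N (js J))) m) / real m)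
      \<longlonglongrightarrow> 1 / real (n + 1) ^ k"
    by (simp add: L_def q_def)
qed

lemma convex_hull_block_points_subset:
  assumes "0 < lam" "L > 0" "\<And>j r. w j r \<in> {0..n}"
  shows "convex hull ((\<lambda>j. block_point lam p L (w j)) ` J) \<subseteq> convex hull (p ` {0..n})"
proof -
  have "block_point lam p L (w j) \<in> convex hull (p ` {0..n})" for j
    using assms(3) by (intro block_point_in_convex_hull[OF assms(1,2)]) auto
  then show ?thesis by (intro hull_minimal) (auto simp: convex_convex_hull)
qed

text \<open>A greedy prefix brings the rescaled remainder into the hull of the block points of the
  rotated counter words; from there an itinerary through the block IFS codes it, and every block
  carries the exact pattern frequencies.\<close>
lemma simply_normal_coding_through_rotated_blocks:
  fixes p :: "nat \<Rightarrow> 'a::euclidean_space" and n N k :: nat and lam :: real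
  defines "K \<equiv> convex hull (p ` {0..n})" and "q \<equiv> Suc n" and "L \<equiv> N * Suc n ^ N"
  defines "C \<equiv> \<lambda>j. block_point lam p L (rotated_word q N j)"
  assumes aff: "aff_dim (p ` {0..n}) = int DIM('a)" and "1 \<le> k" "k \<le> N"
    and lam: "0 < lam" "lam < 1" "1 - lam ^ L \<le> 1 / real q"
    and z: "cball z (real q * (1 - lam) * diameter K) \<subseteq> convex hull (C ` {..<q})"
    and x: "x \<in> interior K"
  shows "\<exists>a. (\<forall>j. a j \<in> {0..n}) \<and> coding_map lam p a = x \<and> simply_normal n k a"
proof -
  have "bounded K" unfolding K_def by (simp add: compact_imp_bounded finite_imp_compact_convex_hull)
  have "0 < L" using assms(6,7) by (simp add: L_def)
  have words: "\<And>j r. rotated_word q N j r \<in> {0..n}"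
    using rotated_word_less[of q N] by (auto simp: q_def less_Suc_eq_le)
  have CK: "convex hull (C ` {..<q}) \<subseteq> K"
    unfolding C_def K_def by (rule convex_hull_block_points_subset[OF lam(1) \<open>0 < L\<close> words])
  moreover have "0 \<le> real q * (1 - lam) * diameter K"
    using lam(2) diameter_ge_0[OF \<open>bounded K\<close>] by simp
  ultimately have "z \<in> K" using z centre_in_cball by blast
  obtain u where u: "\<forall>i\<in>{0..n}. 0 < u i" "sum u {0..n} = 1" "x = (\<Sum>i\<in>{0..n}. u i *\<^sub>R p i)"
    using x interior_convex_hull_eq_positive_weights[OF finite_atLeastAtMost aff] by (auto simp: K_def)
  have "\<forall>i\<in>{0..n}. norm (p i - z) \<le> diameter K"
  proof
    fix i assume "i \<in> {0..n}"
    then have "p i \<in> K" by (simp add: K_def hull_inc)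
    then show "norm (p i - z) \<le> diameter K"
      using diameter_bounded_bound[OF \<open>bounded K\<close> _ \<open>z \<in> K\<close>] by (simp add: dist_norm)
  qed
  then obtain s a where a: "\<forall>t. a t \<in> {0..n}" and
    "norm ((1 / lam ^ s) *\<^sub>R ((\<Sum>i\<in>{0..n}. u i *\<^sub>R p i) - coding_sum lam p a s) - z)
      \<le> real (n + 1) * (1 - lam) * diameter K"
    using greedy_prefix_approximates[OF lam(1,2) u(1,2) \<open>z \<in> K\<close>[unfolded K_def]] by blast
  then have y: "(1 / lam ^ s) *\<^sub>R (x - coding_sum lam p a s) \<in> convex hull (C ` {..<q})"
    using z u(3) by (auto simp: dist_norm norm_minus_commute q_def)
  have "0 < lam ^ L" using lam(1) by simp
  then obtain Y js where Y: "Y 0 = (1 / lam ^ s) *\<^sub>R (x - coding_sum lam p a s)" "\<And>J. js J < q"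
    "\<And>J. Y J \<in> convex hull (C ` {..<q})" "\<And>J. Y J = lam ^ L *\<^sub>R Y (Suc J) + (1 - lam ^ L) *\<^sub>R C (js J)"
    using convex_hull_itinerary[OF _ lam(3) y] by blast
  have "range Y \<subseteq> K" using Y(3) CK by blast
  then have "bounded (range Y)" using \<open>bounded K\<close> by (rule bounded_subset[rotated])
  moreover have "\<forall>J r. rotated_word q N (js J) r \<in> {0..n}" using words by blast
  moreover have "x = coding_sum lam p a s + lam ^ s *\<^sub>R Y 0"
    using Y(1) lam(1) by simp
  ultimately have "coding_map lam p (concat_blocks a s L (\<lambda>J. rotated_word q N (js J))) = x"
    using coding_map_concat_blocks[where B="\<lambda>J. rotated_word q N (js J)", OF lam(1,2) \<open>0 < L\<close> a _ Y(4)[unfolded C_def]]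
    by blast
  moreover have "simply_normal n k (concat_blocks a s L (\<lambda>J. rotated_word q N (js J)))"
    using simply_normal_concat_rotated_words[OF assms(6,7), of js] Y(2) by (simp add: L_def q_def)
  moreover have "\<forall>t. concat_blocks a s L (\<lambda>J. rotated_word q N (js J)) t \<in> {0..n}"
    using a words by (simp add: concat_blocks_def)
  ultimately show ?thesis by blast
qed

lemma interior_point_has_simply_normal_coding:
  fixes p :: "nat \<Rightarrow> 'a::euclidean_space"
  assumes aff: "aff_dim (p ` {0..n}) = int DIM('a)" and "1 \<le> k"
  obtains \<delta> where "0 < \<delta>" "\<And>lam x. 1 - \<delta> < lam \<Longrightarrow> lam < 1 \<Longrightarrow> x \<in> interior (convex hull (p ` {0..n})) \<Longrightarrow>
      \<exists>a. (\<forall>j. a j \<in> {0..n}) \<and> coding_map lam p a = x \<and> simply_normal n k a"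
proof -
  define K where "K = convex hull (p ` {0..n})"
  obtain N \<delta> where N: "k \<le> N" and "0 < \<delta>" and ball: "\<And>lam. 1 - \<delta> < lam \<Longrightarrow> lam < 1 \<Longrightarrow>
      \<exists>z. cball z (real (Suc n) * (1 - lam) * diameter K)
       \<subseteq> convex hull ((\<lambda>j. block_point lam p (N * Suc n ^ N) (rotated_word (Suc n) N j)) ` {..<Suc n})"
    using cball_subset_convex_hull_rotated_block_points[OF aff, of k "diameter K"] by blast
  define L where "L = N * Suc n ^ N"
  have "1 \<le> L" using N assms(2) by (simp add: L_def Suc_le_eq)
  then have "1 \<le> real (Suc n) * real L"
    using mult_mono[of 1 "real (Suc n)" 1 "real L"] by simp
  show ?thesis
  proof (rule that[of "min \<delta> (1 / (real (Suc n) * real L))"])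
    show "0 < min \<delta> (1 / (real (Suc n) * real L))" using \<open>0 < \<delta>\<close> \<open>1 \<le> real (Suc n) * real L\<close> by simp
    fix lam x assume "1 - min \<delta> (1 / (real (Suc n) * real L)) < lam" "lam < 1"
      and x: "x \<in> interior (convex hull (p ` {0..n}))"
    then have lam: "1 - \<delta> < lam" "lam < 1" "1 - lam < 1 / (real (Suc n) * real L)"
      by auto
    moreover have "1 / (real (Suc n) * real L) \<le> 1" using \<open>1 \<le> real (Suc n) * real L\<close> by simp
    ultimately have "0 < lam" by linarith
    have "1 - lam ^ L \<le> real L * (1 - lam)"
      using Bernoulli_inequality[of "- (1 - lam)" L] \<open>0 < lam\<close> by (simp add: algebra_simps)
    also have "\<dots> \<le> 1 / real (Suc n)"
    proof -
      have "(1 - lam) * (real (Suc n) * real L) < 1"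
        using lam(3) \<open>1 \<le> real (Suc n) * real L\<close> by (simp add: pos_less_divide_eq)
      then show ?thesis by (simp add: field_simps)
    qed
    finally have "1 - lam ^ L \<le> 1 / real (Suc n)" .
    moreover obtain z where "cball z (real (Suc n) * (1 - lam) * diameter K)
       \<subseteq> convex hull ((\<lambda>j. block_point lam p L (rotated_word (Suc n) N j)) ` {..<Suc n})"
      using ball lam by (auto simp: L_def)
    ultimately show "\<exists>a. (\<forall>j. a j \<in> {0..n}) \<and> coding_map lam p a = x \<and> simply_normal n k a"
      using simply_normal_coding_through_rotated_blocks[OF aff assms(2) N \<open>0 < lam\<close> lam(2)] x
      by (simp add: K_def L_def)
  qed
qed

theorem theorem1p1:
  fixes p :: "nat \<Rightarrow> 'a::euclidean_space" and n k :: nat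
  assumes "inj_on p {0..n}"
    and "aff_dim (p ` {0..n}) = int DIM('a)"
    and "k \<ge> 1"
  shows "\<exists>\<delta>>0. \<forall>lam. 0 < lam \<and> 1 - \<delta> < lam \<and> lam < 1 \<longrightarrow>
           normal_points lam p n k = interior (attractor lam p n)"
proof -
  obtain \<delta> where "0 < \<delta>" and coding: "\<And>lam x. 1 - \<delta> < lam \<Longrightarrow> lam < 1 \<Longrightarrow>
      x \<in> interior (convex hull (p ` {0..n})) \<Longrightarrow>
      \<exists>a. (\<forall>j. a j \<in> {0..n}) \<and> coding_map lam p a = x \<and> simply_normal n k a"
    using interior_point_has_simply_normal_coding[OF assms(2,3)] by blast
  show ?thesis
  proof (intro exI[of _ "min \<delta> (1 / (n + 1))"] conjI allI impI)
    show "0 < min \<delta> (1 / (n + 1))" using \<open>0 < \<delta>\<close> by simp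
    fix lam :: real assume "0 < lam \<and> 1 - min \<delta> (1 / (n + 1)) < lam \<and> lam < 1"
    then have lam: "0 < lam" "lam < 1" "1 - \<delta> < lam" "1 - lam \<le> 1 / (n + 1)" by auto
    then have attractor: "attractor lam p n = convex hull (p ` {0..n})"
      by (intro attractor_eq_convex_hull)
    show "normal_points lam p n k = interior (attractor lam p n)"
    proof
      show "normal_points lam p n k \<subseteq> interior (attractor lam p n)"
        unfolding normal_points_def attractor
        using coding_map_simply_normal_in_interior[OF assms(2)] lam assms(3) by blast
      show "interior (attractor lam p n) \<subseteq> normal_points lam p n k"
        unfolding normal_points_def attractor using coding[OF lam(3,2)] interior_subset by blast
    qed
  qed
qed

end
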